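(* Let $m\ge2$ and let $a_1,a_2,b_1,b_2,b_3,c_1,\dots,c_{2m+1}\in\mathbb{C}$ with $a_1\ne a_2$, $b_1,b_2,b_3$ pairwise distinct, $c_1,\dots,c_{2m+1}$ pairwise distinct, and $(m+1)a_1+ma_2=b_1+mb_2+mb_3+\sum_{i=1}^{2m+1}c_i$. Let ${\bf B},{\bf C}$ be the $(2m+1)\times(2m+1)$ matrices of the odd family defined in the context. Then ${\bf A}={\bf B}+{\bf C}$ is diagonalizable, with eigenvalue $a_1$ of multiplicity $m+1$ and $a_2$ of multiplicity $m$.
   Context: Notation: $p_i^{jk}=c_i+b_j-a_k$, $q_{ij}=c_i+c_j+b_2+b_3-a_1-a_2$; empty products are $1$. ${\bf B}$ has $B_{11}=b_1$, $B_{1+i,1+i}=b_2$ and $B_{m+1+i,m+1+i}=b_3$ ($1\le i\le m$), $B_{1,1+j}=(-1)^{m-j}p^{21}_{2m+1-j}\frac{\prod_{k=j+1}^m q_{k,2m+1-j}}{\prod_{k=m+1}^{2m-j}(c_k-c_{2m+1-j})}$ ($1\le j\le m$), $B_{1,m+1+j}=(-1)^{m-j}p^{31}_{m+1-j}\frac{\prod_{k=m+1+j}^{2m}q_{m+1-j,k}}{\prod_{k=1}^{m-j}(c_k-c_{m+1-j})}$ ($1\le j\le m$), $B_{1+i,m+1+j}=(-1)^{m-j}p^{31}_{m+1-j}\frac{\prod_{k=1,k\ne m+1-j}^{i}q_{k,2m+1-i}\prod_{k=m+1+j,k\ne2m+1-i}^{2m}q_{m+1-j,k}}{\prod_{k=2m+2-i}^{2m}(c_{2m+1-i}-c_k)\prod_{k=1}^{m-j}(c_k-c_{m+1-j})}$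 ($1\le i,j\le m$), all other entries $0$. ${\bf C}$ has $C_{11}=c_{2m+1}$, $C_{1+i,1+i}=c_{2m+1-i}$, $C_{m+1+i,m+1+i}=c_{m+1-i}$ ($1\le i\le m$), $C_{1+i,1}=-\frac{\prod_{k=1}^i q_{k,2m+1-i}}{\prod_{k=2m+2-i}^{2m}(c_{2m+1-i}-c_k)}$ ($1\le i\le m$), $C_{m+1+i,1}=-\frac{\prod_{k=m+1}^{m+i}q_{m+1-i,k}}{\prod_{k=m+2-i}^m(c_{m+1-i}-c_k)}$ ($1\le i\le m$), $C_{m+1+i,1+j}=(-1)^{m-j}p^{21}_{2m+1-j}\frac{\prod_{k=m+1,k\ne2m+1-j}^{m+i}q_{m+1-i,k}\prod_{k=j+1,k\ne m+1-i}^m q_{k,2m+1-j}}{\prod_{k=m+2-i}^m(c_{m+1-i}-c_k)\prod_{k=m+1}^{2m-j}(c_k-c_{2m+1-j})}$ ($1\le i,j\le m$), all other entries $0$. *)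

theory Defs
  imports Complex_Main "HOL-Computational_Algebra.Polynomial" "Jordan_Normal_Form.Char_Poly"
begin

definition diagonalizable :: "'a :: semiring_1 mat \<Rightarrow> bool" where
  "diagonalizable A \<longleftrightarrow> (\<exists>D. diagonal_mat D \<and> similar_mat A D)"

text \<open>Notation of the paper. The families a, b, c are indexed from 1.\<close>
definition pp :: "(nat \<Rightarrow> complex) \<Rightarrow> (nat \<Rightarrow> complex) \<Rightarrow> (nat \<Rightarrow> complex) \<Rightarrow> nat \<Rightarrow> nat \<Rightarrow> nat \<Rightarrow> complex" where
  "pp a b c i j k = c i + b j - a k"

definition qq :: "(nat \<Rightarrow> complex) \<Rightarrow> (nat \<Rightarrow> complex) \<Rightarrow> (nat \<Rightarrow> complex) \<Rightarrow> nat \<Rightarrow> nat \<Rightarrow> complex" where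
  "qq a b c i j = c i + c j + b 2 + b 3 - a 1 - a 2"

definition Bent :: "nat \<Rightarrow> (nat \<Rightarrow> complex) \<Rightarrow> (nat \<Rightarrow> complex) \<Rightarrow> (nat \<Rightarrow> complex) \<Rightarrow> nat \<Rightarrow> nat \<Rightarrow> complex" where
  "Bent m a b c r s =
    (if r = 1 \<and> s = 1 then b 1
     else if 2 \<le> r \<and> r \<le> m + 1 \<and> s = r then b 2
     else if m + 2 \<le> r \<and> r \<le> 2*m + 1 \<and> s = r then b 3
     else if r = 1 \<and> 2 \<le> s \<and> s \<le> m + 1 then
       (let j = s - 1 in
         (-1) ^ (m - j) * pp a b c (2*m + 1 - j) 2 1
         * (\<Prod>k\<in>{j+1..m}. qq a b c k (2*m + 1 - j))
         / (\<Prod>k\<in>{m+1..2*m - j}. (c k - c (2*m + 1 - j))))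
     else if r = 1 \<and> m + 2 \<le> s \<and> s \<le> 2*m + 1 then
       (let j = s - (m + 1) in
         (-1) ^ (m - j) * pp a b c (m + 1 - j) 3 1
         * (\<Prod>k\<in>{m+1+j..2*m}. qq a b c (m + 1 - j) k)
         / (\<Prod>k\<in>{1..m - j}. (c k - c (m + 1 - j))))
     else if 2 \<le> r \<and> r \<le> m + 1 \<and> m + 2 \<le> s \<and> s \<le> 2*m + 1 then
       (let i = r - 1; j = s - (m + 1) in
         (-1) ^ (m - j) * pp a b c (m + 1 - j) 3 1
         * ((\<Prod>k\<in>{1..i} - {m + 1 - j}. qq a b c k (2*m + 1 - i))
            * (\<Prod>k\<in>{m+1+j..2*m} - {2*m + 1 - i}. qq a b c (m + 1 - j) k))
         / ((\<Prod>k\<in>{2*m+2-i..2*m}. (c (2*m + 1 - i) - c k))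
            * (\<Prod>k\<in>{1..m - j}. (c k - c (m + 1 - j)))))
     else 0)"

definition Cent :: "nat \<Rightarrow> (nat \<Rightarrow> complex) \<Rightarrow> (nat \<Rightarrow> complex) \<Rightarrow> (nat \<Rightarrow> complex) \<Rightarrow> nat \<Rightarrow> nat \<Rightarrow> complex" where
  "Cent m a b c r s =
    (if r = 1 \<and> s = 1 then c (2*m + 1)
     else if 2 \<le> r \<and> r \<le> m + 1 \<and> s = r then c (2*m + 1 - (r - 1))
     else if m + 2 \<le> r \<and> r \<le> 2*m + 1 \<and> s = r then c (m + 1 - (r - (m + 1)))
     else if 2 \<le> r \<and> r \<le> m + 1 \<and> s = 1 then
       (let i = r - 1 in
         - (\<Prod>k\<in>{1..i}. qq a b c k (2*m + 1 - i))
           / (\<Prod>k\<in>{2*m+2-i..2*m}. (c (2*m + 1 - i) - c k)))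
     else if m + 2 \<le> r \<and> r \<le> 2*m + 1 \<and> s = 1 then
       (let i = r - (m + 1) in
         - (\<Prod>k\<in>{m+1..m+i}. qq a b c (m + 1 - i) k)
           / (\<Prod>k\<in>{m+2-i..m}. (c (m + 1 - i) - c k)))
     else if m + 2 \<le> r \<and> r \<le> 2*m + 1 \<and> 2 \<le> s \<and> s \<le> m + 1 then
       (let i = r - (m + 1); j = s - 1 in
         (-1) ^ (m - j) * pp a b c (2*m + 1 - j) 2 1
         * ((\<Prod>k\<in>{m+1..m+i} - {2*m + 1 - j}. qq a b c (m + 1 - i) k)
            * (\<Prod>k\<in>{j+1..m} - {m + 1 - i}. qq a b c k (2*m + 1 - j)))
         / ((\<Prod>k\<in>{m+2-i..m}. (c (m + 1 - i) - c k))
            * (\<Prod>k\<in>{m+1..2*m - j}. (c k - c (2*m + 1 - j)))))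
     else 0)"

text \<open>The (2m+1) x (2m+1) matrices; JNF matrices are 0-indexed, so entry (i,j)
  of the Isabelle matrix is the paper's entry (i+1,j+1).\<close>
definition Bmat :: "nat \<Rightarrow> (nat \<Rightarrow> complex) \<Rightarrow> (nat \<Rightarrow> complex) \<Rightarrow> (nat \<Rightarrow> complex) \<Rightarrow> complex mat" where
  "Bmat m a b c = mat (2*m + 1) (2*m + 1) (\<lambda>(i, j). Bent m a b c (i + 1) (j + 1))"

definition Cmat :: "nat \<Rightarrow> (nat \<Rightarrow> complex) \<Rightarrow> (nat \<Rightarrow> complex) \<Rightarrow> (nat \<Rightarrow> complex) \<Rightarrow> complex mat" where
  "Cmat m a b c = mat (2*m + 1) (2*m + 1) (\<lambda>(i, j). Cent m a b c (i + 1) (j + 1))"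

end

theory Submission
  imports Defs "Jordan_Normal_Form.Jordan_Normal_Form_Existence"
begin

text \<open>Write \<open>x l = c (2*m+1-l)\<close> and \<open>y l = c (m+1-l)\<close>. After this reindexing the off-diagonal
  entries of \<open>A = B + C\<close> are quotients of products of the linear forms \<open>x i + y j + s\<close>,
  \<open>s = b 2 + b 3 - a 1 - a 2\<close>, by Vandermonde-type products. Every entry of
  \<open>A^2 - (a 1 + a 2) A + a 1 a 2 I\<close> then becomes a sum \<open>\<Sum>j. F (x j) / \<Prod>l\<noteq>j. (x j - x l)\<close>
  (or the same with \<open>y\<close>) for a polynomial \<open>F\<close> of degree at most \<open>m\<close>, which Lagrange
  interpolation evaluates through the two top coefficients of \<open>F\<close>; all entries vanish, the corner
  entry by virtue of the trace condition. So \<open>A\<close> is annihilated by \<open>(X - a 1)(X - a 2)\<close> with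
  \<open>a 1 \<noteq> a 2\<close>: its Jordan blocks are \<open>1 \<times> 1\<close> with eigenvalue \<open>a 1\<close> or \<open>a 2\<close>, and the trace,
  which the hypothesis makes \<open>(m+1) a 1 + m a 2\<close>, determines the two multiplicities.\<close>

lemma coeff_monic_linear_mult:
  fixes p :: "'a::comm_semiring_1 poly"
  shows "coeff ([:u, 1:] * p) k = u * coeff p k + (if k = 0 then 0 else coeff p (k - 1))"
  by (cases k) (simp_all add: mult_pCons_left)

lemma degree_prod_monic_linear:
  fixes u :: "'b \<Rightarrow> 'a::field"
  shows "finite L \<Longrightarrow> degree (\<Prod>l\<in>L. [:u l, 1:]) = card L"
  by (subst degree_prod_sum_eq) auto

lemma prod_monic_linear_coeffs:
  fixes u :: "'b \<Rightarrow> 'a::field"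
  assumes "finite L"
  shows "coeff (\<Prod>l\<in>L. [:u l, 1:]) (card L) = 1
    \<and> (card L \<ge> 1 \<longrightarrow> coeff (\<Prod>l\<in>L. [:u l, 1:]) (card L - 1) = (\<Sum>l\<in>L. u l))
    \<and> (card L \<ge> 2 \<longrightarrow> 2 * coeff (\<Prod>l\<in>L. [:u l, 1:]) (card L - 2)
          = (\<Sum>l\<in>L. u l)^2 - (\<Sum>l\<in>L. (u l)^2))"
  using assms
proof (induction L rule: finite_induct)
  case (insert a L)
  let ?p = "\<Prod>l\<in>L. [:u l, 1:]"
  have card: "card (insert a L) = Suc (card L)" using insert by simp
  have coeff_insert: "coeff (\<Prod>l\<in>insert a L. [:u l, 1:]) k
      = u a * coeff ?p k + (if k = 0 then 0 else coeff ?p (k - 1))" for k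
    unfolding prod.insert[OF insert.hyps] by (rule coeff_monic_linear_mult)
  have top: "coeff ?p (Suc (card L)) = 0"
    using degree_prod_monic_linear[OF insert.hyps(1), of u] by (simp add: coeff_eq_0)
  show ?case
  proof (intro conjI impI)
    show "coeff (\<Prod>l\<in>insert a L. [:u l, 1:]) (card (insert a L)) = 1"
      unfolding card coeff_insert using insert.IH top by simp
    show "coeff (\<Prod>l\<in>insert a L. [:u l, 1:]) (card (insert a L) - 1) = (\<Sum>l\<in>insert a L. u l)"
    proof (cases "L = {}")
      case False
      then have "card L \<ge> 1" using insert.hyps(1) by (simp add: Suc_le_eq card_gt_0_iff)
      then show ?thesis unfolding card coeff_insert using insert.IH insert.hyps by simp
    qed (simp add: coeff_insert)
    assume "2 \<le> card (insert a L)"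
    then consider "card L = 1" | "card L \<ge> 2" using card by linarith
    then show "2 * coeff (\<Prod>l\<in>insert a L. [:u l, 1:]) (card (insert a L) - 2)
          = (\<Sum>l\<in>insert a L. u l)^2 - (\<Sum>l\<in>insert a L. (u l)^2)"
    proof cases
      case 1
      then obtain b where "L = {b}" by (auto simp: card_Suc_eq)
      then show ?thesis using insert by (simp add: power2_eq_square algebra_simps)
    next
      case 2
      then have "card (insert a L) - 2 = Suc (card L - 2)" "card L - 2 = card L - 1 - 1"
        using card by auto
      then show ?thesis
        unfolding coeff_insert using insert.IH insert.hyps 2 by (simp add: power2_eq_square algebra_simps)
    qed
  qed
qed simp

lemma coeff_prod_monic_linear_top:
  fixes u :: "'b \<Rightarrow> 'a::field"
  shows "finite L \<Longrightarrow> coeff (\<Prod>l\<in>L. [:u l, 1:]) (card L) = 1"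
  using prod_monic_linear_coeffs by blast

lemma coeff_prod_monic_linear_sub1:
  fixes u :: "'b \<Rightarrow> 'a::field"
  shows "finite L \<Longrightarrow> card L \<ge> 1 \<Longrightarrow> coeff (\<Prod>l\<in>L. [:u l, 1:]) (card L - 1) = (\<Sum>l\<in>L. u l)"
  using prod_monic_linear_coeffs by blast

lemma coeff_prod_monic_linear_sub2:
  fixes u :: "'b \<Rightarrow> 'a::field"
  shows "finite L \<Longrightarrow> card L \<ge> 2 \<Longrightarrow>
    2 * coeff (\<Prod>l\<in>L. [:u l, 1:]) (card L - 2) = (\<Sum>l\<in>L. u l)^2 - (\<Sum>l\<in>L. (u l)^2)"
  using prod_monic_linear_coeffs by blast

section \<open>Lagrange interpolation at the nodes \<open>x 1, \<dots>, x m\<close>\<close>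

definition node_poly :: "(nat \<Rightarrow> 'a::field) \<Rightarrow> nat \<Rightarrow> 'a poly" where
  "node_poly x m = (\<Prod>l\<in>{1..m}. [:- x l, 1:])"

definition node_poly_except :: "(nat \<Rightarrow> 'a::field) \<Rightarrow> nat \<Rightarrow> nat \<Rightarrow> 'a poly" where
  "node_poly_except x m j = (\<Prod>l\<in>{1..m}-{j}. [:- x l, 1:])"

definition node_weight :: "(nat \<Rightarrow> 'a::field) \<Rightarrow> nat \<Rightarrow> nat \<Rightarrow> 'a" where
  "node_weight x m j = (\<Prod>l\<in>{1..m}-{j}. (x j - x l))"

lemma node_weight_nonzero:
  assumes "inj_on x {1..m}" "j \<in> {1..m}"
  shows "node_weight x m j \<noteq> 0"
  using assms unfolding node_weight_def by (auto simp: inj_on_eq_iff)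

lemma poly_node_poly: "poly (node_poly x m) t = (\<Prod>l\<in>{1..m}. (t - x l))"
  unfolding node_poly_def by (simp add: poly_prod)

lemma poly_node_poly_except: "poly (node_poly_except x m j) t = (\<Prod>l\<in>{1..m}-{j}. (t - x l))"
  unfolding node_poly_except_def by (simp add: poly_prod)

lemma node_poly_at_node: "j \<in> {1..m} \<Longrightarrow> poly (node_poly x m) (x j) = 0"
  unfolding poly_node_poly by (rule prod_zero) auto

lemma degree_node_poly_except: "j \<in> {1..m} \<Longrightarrow> degree (node_poly_except x m j) = m - 1"
  unfolding node_poly_except_def by (subst degree_prod_monic_linear) auto

lemma coeff_node_poly_except_top: "j \<in> {1..m} \<Longrightarrow> coeff (node_poly_except x m j) (m - 1) = 1"
  using coeff_prod_monic_linear_top[of "{1..m}-{j}" "\<lambda>l. - x l"]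
  unfolding node_poly_except_def by simp

lemma node_poly_coeffs:
  fixes x :: "nat \<Rightarrow> 'a::field"
  shows "degree (node_poly x m) = m" "coeff (node_poly x m) m = 1"
    "m \<ge> 1 \<Longrightarrow> coeff (node_poly x m) (m - 1) = - (\<Sum>l=1..m. x l)"
    "m \<ge> 2 \<Longrightarrow> 2 * coeff (node_poly x m) (m - 2) = (\<Sum>l=1..m. x l)^2 - (\<Sum>l=1..m. (x l)^2)"
  using degree_prod_monic_linear[of "{1..m}" "\<lambda>l. - x l"]
    coeff_prod_monic_linear_top[of "{1..m}" "\<lambda>l. - x l"]
    coeff_prod_monic_linear_sub1[of "{1..m}" "\<lambda>l. - x l"]
    coeff_prod_monic_linear_sub2[of "{1..m}" "\<lambda>l. - x l"]
  unfolding node_poly_def by (simp_all add: sum_negf)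

lemma lagrange_interpolation:
  fixes x :: "nat \<Rightarrow> 'a::field"
  assumes inj: "inj_on x {1..m}" and m: "m \<ge> 1" and deg_F: "degree F \<le> m"
  shows "(\<Sum>j=1..m. Polynomial.smult (poly F (x j) / node_weight x m j) (node_poly_except x m j))
         = F - Polynomial.smult (coeff F m) (node_poly x m)"
    (is "?L = ?R")
proof (rule poly_eqI_degree[of "x ` {1..m}"])
  have card: "card (x ` {1..m}) = m" using inj by (simp add: card_image)
  show "degree ?L < card (x ` {1..m})"
    unfolding card
  proof (rule le_less_trans[OF degree_sum_le[of _ _ "m - 1"]])
    fix j assume "j \<in> {1..m}"
    then show "degree (Polynomial.smult (poly F (x j) / node_weight x m j) (node_poly_except x m j)) \<le> m - 1"
      using degree_node_poly_except[of j m x] by (simp add: degree_smult_le)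
  qed (use m in auto)
  have "degree ?R \<le> m"
    using deg_F degree_smult_le[of "coeff F m" "node_poly x m"] node_poly_coeffs(1)[of x m]
    by (metis degree_diff_le)
  moreover have "coeff ?R m = 0" using node_poly_coeffs(2)[of x m] by simp
  ultimately have "degree ?R < m"
    using m by (metis le_neq_implies_less leading_coeff_0_iff degree_0 not_one_le_zero)
  then show "degree ?R < card (x ` {1..m})" unfolding card .
  fix t assume "t \<in> x ` {1..m}"
  then obtain k where k: "k \<in> {1..m}" "t = x k" by auto
  have vanish: "poly (node_poly_except x m j) t = 0" if "j \<in> {1..m} - {k}" for j
    unfolding poly_node_poly_except k(2) by (rule prod_zero) (use that k in auto)
  have "poly ?L t = (\<Sum>j=1..m. poly F (x j) / node_weight x m j * poly (node_poly_except x m j) t)"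
    by (simp add: poly_sum)
  also have "\<dots> = poly F (x k) / node_weight x m k * poly (node_poly_except x m k) t"
    by (rule sum.remove[OF _ k(1), THEN trans]) (simp_all add: vanish)
  also have "\<dots> = poly F (x k)"
    using node_weight_nonzero[OF inj k(1)]
    unfolding poly_node_poly_except node_weight_def k(2) by simp
  also have "\<dots> = poly ?R t" using node_poly_at_node[OF k(1), of x] k(2) by simp
  finally show "poly ?L t = poly ?R t" .
qed

lemma lagrange_interpolation_eval:
  fixes x :: "nat \<Rightarrow> 'a::field"
  assumes "inj_on x {1..m}" and "m \<ge> 1" and "degree F \<le> m"
  shows "(\<Sum>j=1..m. poly F (x j) / node_weight x m j * (\<Prod>l\<in>{1..m}-{j}. (t - x l)))
         = poly F t - coeff F m * (\<Prod>l\<in>{1..m}. (t - x l))"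
  using arg_cong[OF lagrange_interpolation[OF assms], of "\<lambda>p. poly p t"]
  by (simp add: poly_sum poly_node_poly_except poly_node_poly)

lemma lagrange_node_sum:
  fixes x :: "nat \<Rightarrow> 'a::field"
  assumes "inj_on x {1..m}" and m: "m \<ge> 1" and "degree F \<le> m"
  shows "(\<Sum>j=1..m. poly F (x j) / node_weight x m j)
         = coeff F (m - 1) + coeff F m * (\<Sum>l=1..m. x l)"
proof -
  have "(\<Sum>j=1..m. poly F (x j) / node_weight x m j)
     = coeff (\<Sum>j=1..m. Polynomial.smult (poly F (x j) / node_weight x m j) (node_poly_except x m j)) (m - 1)"
    unfolding coeff_sum coeff_smult
  proof (intro sum.cong refl)
    fix j assume "j \<in> {1..m}"
    then show "poly F (x j) / node_weight x m j
        = poly F (x j) / node_weight x m j * coeff (node_poly_except x m j) (m - 1)"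
      using coeff_node_poly_except_top[of j m x] by simp
  qed
  also have "\<dots> = coeff F (m - 1) + coeff F m * (\<Sum>l=1..m. x l)"
    unfolding lagrange_interpolation[OF assms] using node_poly_coeffs(3)[OF m, of x] by simp
  finally show ?thesis .
qed

definition shifted_linear_prod :: "'a::field \<Rightarrow> 'b set \<Rightarrow> ('b \<Rightarrow> 'a) \<Rightarrow> 'a poly" where
  "shifted_linear_prod c L w = [:c, 1:] * (\<Prod>l\<in>L. [:w l, 1:])"

lemma poly_shifted_linear_prod:
  "poly (shifted_linear_prod c L w) t = (t + c) * (\<Prod>l\<in>L. (t + w l))"
  unfolding shifted_linear_prod_def by (simp add: poly_prod algebra_simps)

lemma shifted_linear_prod_coeffs:
  assumes "finite L" "card L = n"
  shows "degree (shifted_linear_prod c L w) = n + 1"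
    "coeff (shifted_linear_prod c L w) (n + 1) = 1"
    "coeff (shifted_linear_prod c L w) n = c + (\<Sum>l\<in>L. w l)"
proof -
  let ?p = "\<Prod>l\<in>L. [:w l, 1:]"
  have coeff_eq: "coeff (shifted_linear_prod c L w) k = c * coeff ?p k + (if k = 0 then 0 else coeff ?p (k - 1))" for k
    unfolding shifted_linear_prod_def by (rule coeff_monic_linear_mult)
  have deg: "degree ?p = n" and top: "coeff ?p n = 1"
    using degree_prod_monic_linear[OF assms(1)] coeff_prod_monic_linear_top[OF assms(1)] assms(2) by auto
  show "degree (shifted_linear_prod c L w) = n + 1" unfolding shifted_linear_prod_def
    by (subst degree_mult_eq) (use deg top in auto)
  show "coeff (shifted_linear_prod c L w) (n + 1) = 1" unfolding coeff_eq using deg top by (simp add: coeff_eq_0)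
  show "coeff (shifted_linear_prod c L w) n = c + (\<Sum>l\<in>L. w l)"
  proof (cases "n = 0")
    case True
    then show ?thesis using assms unfolding coeff_eq by simp
  next
    case False
    then show ?thesis unfolding coeff_eq using top coeff_prod_monic_linear_sub1[OF assms(1), of w] assms(2) by simp
  qed
qed

lemma node_sum_omit_one:
  fixes x y :: "nat \<Rightarrow> 'a::field"
  assumes iy: "inj_on y {1..m}" and m: "m \<ge> 2" and k: "k \<in> {1..m}"
  shows "(\<Sum>j=1..m. (y j + g) * (\<Prod>l\<in>{1..m}-{k}. (x l + y j + s)) / node_weight y m j)
       = g + (\<Sum>l\<in>{1..m}-{k}. (x l + s)) + (\<Sum>l=1..m. y l)"
proof -
  let ?F = "shifted_linear_prod g ({1..m}-{k}) (\<lambda>l. x l + s)"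
  note F = shifted_linear_prod_coeffs[of "{1..m}-{k}" "m - 1" g "\<lambda>l. x l + s"]
  have m1: "m - 1 + 1 = m" using m by simp
  have "(\<Sum>j=1..m. (y j + g) * (\<Prod>l\<in>{1..m}-{k}. (x l + y j + s)) / node_weight y m j)
      = (\<Sum>j=1..m. poly ?F (y j) / node_weight y m j)"
    unfolding poly_shifted_linear_prod by (intro sum.cong refl) (simp add: add_ac)
  also have "\<dots> = coeff ?F (m - 1) + coeff ?F m * (\<Sum>l=1..m. y l)"
    by (rule lagrange_node_sum[OF iy]) (use m F k m1 in auto)
  also have "\<dots> = g + (\<Sum>l\<in>{1..m}-{k}. (x l + s)) + (\<Sum>l=1..m. y l)"
    using F k m1 by simp
  finally show ?thesis .
qed

lemma node_sum_omit_two: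
  fixes x y :: "nat \<Rightarrow> 'a::field"
  assumes iy: "inj_on y {1..m}" and m: "m \<ge> 2"
    and i: "i \<in> {1..m}" and k: "k \<in> {1..m}" and ik: "i \<noteq> k"
  shows "(\<Sum>j=1..m. (y j + g) * (\<Prod>l\<in>{1..m}-{i,k}. (x l + y j + s)) / node_weight y m j) = 1"
proof -
  let ?F = "shifted_linear_prod g ({1..m}-{i,k}) (\<lambda>l. x l + s)"
  have card: "card ({1..m}-{i,k}) = m - 2" using i k ik by (simp add: card_Diff_subset)
  note F = shifted_linear_prod_coeffs[OF _ card, of g "\<lambda>l. x l + s"]
  have m1: "m - 2 + 1 = m - 1" using m by simp
  have "(\<Sum>j=1..m. (y j + g) * (\<Prod>l\<in>{1..m}-{i,k}. (x l + y j + s)) / node_weight y m j)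
      = (\<Sum>j=1..m. poly ?F (y j) / node_weight y m j)"
    unfolding poly_shifted_linear_prod by (intro sum.cong refl) (simp add: add_ac)
  also have "\<dots> = coeff ?F (m - 1) + coeff ?F m * (\<Sum>l=1..m. y l)"
    by (rule lagrange_node_sum[OF iy]) (use m F m1 in auto)
  also have "\<dots> = 1"
    using F m1 m by (simp add: coeff_eq_0)
  finally show ?thesis .
qed

lemma prod_neg_terms:
  fixes f :: "'b \<Rightarrow> 'a::comm_ring_1"
  shows "finite L \<Longrightarrow> (\<Prod>l\<in>L. - f l) = (-1) ^ card L * (\<Prod>l\<in>L. f l)"
  by (induction L rule: finite_induct) simp_all

lemma node_sum_omit_one_interpolated:
  fixes x y :: "nat \<Rightarrow> 'a::field"
  assumes iy: "inj_on y {1..m}" and m: "m \<ge> 2" and i: "i \<in> {1..m}"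
  shows "(\<Sum>j=1..m. (y j + g) * (\<Prod>l\<in>{1..m}-{i}. (x l + y j + s))
            * (\<Prod>l\<in>{1..m}-{j}. (y l + x i + s)) / node_weight y m j)
       = (g - x i - s) * node_weight x m i + (\<Prod>l\<in>{1..m}. (y l + x i + s))"
proof -
  let ?F = "shifted_linear_prod g ({1..m}-{i}) (\<lambda>l. x l + s)"
  let ?t = "- (x i + s)" and ?sg = "(-1::'a) ^ (m - 1)"
  note F = shifted_linear_prod_coeffs[of "{1..m}-{i}" "m - 1" g "\<lambda>l. x l + s"]
  have m1: "m - 1 + 1 = m" using m by simp
  have sg_sq: "?sg * ?sg = 1" by (simp add: power_add[symmetric])
  have sg_m: "?sg * (-1) ^ m = -1"
    using m by (simp add: power_add[symmetric] flip: power_Suc)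
  have flip_j: "(\<Prod>l\<in>{1..m}-{j}. (y l + x i + s)) = ?sg * (\<Prod>l\<in>{1..m}-{j}. (?t - y l))"
    if "j \<in> {1..m}" for j
    using prod_neg_terms[of "{1..m}-{j}" "\<lambda>l. ?t - y l"] that by (simp add: algebra_simps)
  have flip_all: "(\<Prod>l\<in>{1..m}. (?t - y l)) = (-1) ^ m * (\<Prod>l\<in>{1..m}. (y l + x i + s))"
    using prod_neg_terms[of "{1..m}" "\<lambda>l. y l + x i + s"] by (simp add: algebra_simps)
  have "poly ?F ?t = (g - x i - s) * (\<Prod>l\<in>{1..m}-{i}. (x l - x i))"
    unfolding poly_shifted_linear_prod by (simp add: algebra_simps)
  also have "(\<Prod>l\<in>{1..m}-{i}. (x l - x i)) = ?sg * node_weight x m i"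
    using prod_neg_terms[of "{1..m}-{i}" "\<lambda>l. x i - x l"] i unfolding node_weight_def by simp
  finally have F_at_t: "poly ?F ?t = (g - x i - s) * (?sg * node_weight x m i)" .
  have "(\<Sum>j=1..m. (y j + g) * (\<Prod>l\<in>{1..m}-{i}. (x l + y j + s))
            * (\<Prod>l\<in>{1..m}-{j}. (y l + x i + s)) / node_weight y m j)
      = ?sg * (\<Sum>j=1..m. poly ?F (y j) / node_weight y m j * (\<Prod>l\<in>{1..m}-{j}. (?t - y l)))"
    unfolding sum_distrib_left poly_shifted_linear_prod
    by (intro sum.cong refl, subst flip_j) (auto simp: add_ac mult_ac)
  also have "(\<Sum>j=1..m. poly ?F (y j) / node_weight y m j * (\<Prod>l\<in>{1..m}-{j}. (?t - y l)))
      = poly ?F ?t - coeff ?F m * (\<Prod>l\<in>{1..m}. (?t - y l))"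
    by (rule lagrange_interpolation_eval[OF iy]) (use m F i m1 in auto)
  also have "?sg * \<dots> = (g - x i - s) * node_weight x m i * (?sg * ?sg)
      - (\<Prod>l\<in>{1..m}. (y l + x i + s)) * (?sg * (-1) ^ m)"
    unfolding F_at_t flip_all using F i m1 by (simp add: algebra_simps)
  also have "\<dots> = (g - x i - s) * node_weight x m i + (\<Prod>l\<in>{1..m}. (y l + x i + s))"
    unfolding sg_sq sg_m by simp
  finally show ?thesis .
qed

lemma prod_monic_linear_minus_node_poly:
  fixes x u :: "nat \<Rightarrow> 'a::field"
  assumes m: "m \<ge> 2"
  defines "R \<equiv> (\<Prod>l\<in>{1..m}. [:u l, 1:]) - node_poly x m"
  shows "degree R \<le> m - 1"
    and "coeff R (m - 1) = (\<Sum>l=1..m. x l + u l)"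
    and "2 * coeff R (m - 2)
      = (\<Sum>l=1..m. u l)^2 - (\<Sum>l=1..m. (u l)^2) - (\<Sum>l=1..m. x l)^2 + (\<Sum>l=1..m. (x l)^2)"
proof -
  have deg: "degree R \<le> m"
    unfolding R_def by (intro degree_diff_le) (simp_all add: degree_prod_monic_linear node_poly_coeffs(1))
  have top: "coeff R m = 0"
    unfolding R_def using coeff_prod_monic_linear_top[of "{1..m}" u] node_poly_coeffs(2)[of x m] by simp
  show "degree R \<le> m - 1"
  proof (rule ccontr)
    assume "\<not> degree R \<le> m - 1"
    then have "degree R = m" using deg by linarith
    then show False using top m leading_coeff_0_iff[of R] by simp
  qed
  show "coeff R (m - 1) = (\<Sum>l=1..m. x l + u l)"
    unfolding R_def using coeff_prod_monic_linear_sub1[of "{1..m}" u] node_poly_coeffs(3)[of m x] m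
    by (simp add: sum.distrib)
  show "2 * coeff R (m - 2)
      = (\<Sum>l=1..m. u l)^2 - (\<Sum>l=1..m. (u l)^2) - (\<Sum>l=1..m. x l)^2 + (\<Sum>l=1..m. (x l)^2)"
    unfolding R_def using coeff_prod_monic_linear_sub2[of "{1..m}" u] node_poly_coeffs(4)[of m x] m
    by (simp add: right_diff_distrib)
qed

lemma node_sum_full:
  fixes x u :: "nat \<Rightarrow> 'a::field"
  assumes ix: "inj_on x {1..m}" and m: "m \<ge> 2"
  defines "T \<equiv> (\<Sum>l=1..m. x l + u l)"
  shows "2 * (\<Sum>j=1..m. (x j + b) * (\<Prod>l\<in>{1..m}. (u l + x j)) / node_weight x m j)
     = T * (T + 2 * b) + (\<Sum>l=1..m. (x l)^2) - (\<Sum>l=1..m. (u l)^2)"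
proof -
  define R where "R = (\<Prod>l\<in>{1..m}. [:u l, 1:]) - node_poly x m"
  define F where "F = [:b, 1:] * R"
  note R = prod_monic_linear_minus_node_poly[OF m, of u x, folded R_def T_def]
  have "m - 1 - 1 = m - 2" by simp
  then have sub1_F: "coeff F (m - 1) = b * T + coeff R (m - 2)"
    unfolding F_def coeff_monic_linear_mult using R(2) m by simp
  have top_F: "coeff F m = T"
    unfolding F_def coeff_monic_linear_mult using R(1,2) m by (simp add: coeff_eq_0)
  have deg_F: "degree F \<le> m"
    using degree_mult_le[of "[:b, 1:]" R] R(1) m unfolding F_def by simp
  have "poly F (x j) = (x j + b) * (\<Prod>l\<in>{1..m}. (u l + x j))" if "j \<in> {1..m}" for j
    unfolding F_def R_def using node_poly_at_node[OF that, of x] by (simp add: poly_prod algebra_simps)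
  then have "(\<Sum>j=1..m. (x j + b) * (\<Prod>l\<in>{1..m}. (u l + x j)) / node_weight x m j)
      = (\<Sum>j=1..m. poly F (x j) / node_weight x m j)"
    by simp
  also have "\<dots> = coeff F (m - 1) + coeff F m * (\<Sum>l=1..m. x l)"
    by (rule lagrange_node_sum[OF ix _ deg_F]) (use m in simp)
  finally have "2 * (\<Sum>j=1..m. (x j + b) * (\<Prod>l\<in>{1..m}. (u l + x j)) / node_weight x m j)
      = 2 * b * T + 2 * coeff R (m - 2) + 2 * T * (\<Sum>l=1..m. x l)"
    unfolding sub1_F top_F by (simp add: algebra_simps)
  moreover have "T = (\<Sum>l=1..m. x l) + (\<Sum>l=1..m. u l)"
    unfolding T_def by (rule sum.distrib)
  ultimately show ?thesis
    unfolding R(3) by (simp add: power2_eq_square algebra_simps)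
qed

text \<open>Put \<open>x l = c (2*m+1-l)\<close>, \<open>y l = c (m+1-l)\<close>, \<open>s = b 2 + b 3 - a 1 - a 2\<close>,
  \<open>\<beta> = b 2 - a 1\<close> and \<open>\<gamma> = b 3 - a 1\<close>. Indexing rows and columns by \<open>0\<close>, the
  \<open>x\<close>-block \<open>1..m\<close> and the \<open>y\<close>-block \<open>m+1..2*m\<close>, the entries of \<open>A = B + C\<close> off the
  diagonal become \<open>top_entry\<close> (row \<open>0\<close>), \<open>left_entry\<close> (column \<open>0\<close>) and \<open>cross_entry\<close>
  (between the two blocks), with the roles of \<open>(x, \<beta>)\<close> and \<open>(y, \<gamma>)\<close> exchanged for the
  \<open>y\<close>-block.\<close>

definition diffs_below :: "(nat \<Rightarrow> 'a::field) \<Rightarrow> nat \<Rightarrow> 'a" where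
  "diffs_below x i = (\<Prod>l\<in>{1..<i}. (x i - x l))"

definition diffs_above :: "(nat \<Rightarrow> 'a::field) \<Rightarrow> nat \<Rightarrow> nat \<Rightarrow> 'a" where
  "diffs_above x m j = (\<Prod>l\<in>{j<..m}. (x l - x j))"

definition top_entry ::
  "nat \<Rightarrow> (nat \<Rightarrow> 'a::field) \<Rightarrow> (nat \<Rightarrow> 'a) \<Rightarrow> 'a \<Rightarrow> 'a \<Rightarrow> nat \<Rightarrow> 'a" where
  "top_entry m x y \<beta> s j =
     (-1)^(m-j) * (x j + \<beta>) * (\<Prod>l\<in>{1..m-j}. (y l + x j + s)) / diffs_above x m j"

definition left_entry ::
  "nat \<Rightarrow> (nat \<Rightarrow> 'a::field) \<Rightarrow> (nat \<Rightarrow> 'a) \<Rightarrow> 'a \<Rightarrow> nat \<Rightarrow> 'a" where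
  "left_entry m x y s i = - (\<Prod>l\<in>{m+1-i..m}. (y l + x i + s)) / diffs_below x i"

definition cross_entry ::
  "nat \<Rightarrow> (nat \<Rightarrow> 'a::field) \<Rightarrow> (nat \<Rightarrow> 'a) \<Rightarrow> 'a \<Rightarrow> 'a \<Rightarrow> nat \<Rightarrow> nat \<Rightarrow> 'a" where
  "cross_entry m x y \<gamma> s i j = (-1)^(m-j) * (y j + \<gamma>) *
     ((\<Prod>l\<in>{m+1-i..m}-{j}. (y l + x i + s)) * (\<Prod>l\<in>{1..m-j}-{i}. (x l + y j + s)))
     / (diffs_below x i * diffs_above y m j)"

lemma node_weight_split:
  assumes "j \<in> {1..m}"
  shows "node_weight x m j = (-1)^(m-j) * diffs_below x j * diffs_above x m j"
proof -
  have e: "{1..m}-{j} = {1..<j} \<union> {j<..m}" using assms by auto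
  have "node_weight x m j = (\<Prod>l\<in>{1..<j}. (x j - x l)) * (\<Prod>l\<in>{j<..m}. (x j - x l))"
    unfolding node_weight_def e by (rule prod.union_disjoint) auto
  also have "(\<Prod>l\<in>{j<..m}. (x j - x l)) = (\<Prod>l\<in>{j<..m}. (-1) * (x l - x j))"
    by (intro prod.cong) auto
  also have "\<dots> = (-1)^(m-j) * diffs_above x m j"
    unfolding diffs_above_def prod.distrib by simp
  finally show ?thesis unfolding diffs_below_def by simp
qed

lemma inverse_neg_one_power: "inverse ((-1::'a::field)^n) = (-1)^n"
  by (simp add: power_inverse[symmetric])

lemma prod_remove_if:
  fixes g :: "'b \<Rightarrow> 'a::comm_monoid_mult"
  shows "finite A \<Longrightarrow> prod g A = prod g (A - {a}) * (if a \<in> A then g a else 1)"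
  by (cases "a \<in> A") (simp_all add: prod.remove mult.commute)

lemma prod_split_reflected:
  fixes g :: "nat \<Rightarrow> 'a::comm_monoid_mult"
  assumes "j \<le> m"
  shows "prod g ({1..m-j} - B) * prod g ({m+1-j..m} - B) = prod g ({1..m} - B)"
proof -
  have "{1..m} - B = ({1..m-j} - B) \<union> ({m+1-j..m} - B)" using assms by auto
  moreover have "({1..m-j} - B) \<inter> ({m+1-j..m} - B) = {}" by auto
  ultimately show ?thesis by (simp add: prod.union_disjoint[symmetric])
qed

lemma reflected_interval_mem_iff:
  assumes "i \<in> {1..m}" "j \<in> {1..m::nat}"
  shows "(j \<in> {m+1-i..m}) = (i \<in> {m+1-j..m})" "(j \<in> {1..m-i}) = (i \<in> {1..m-j})"
  using assms by auto

lemma cross_entry_product_ne: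
  fixes x y :: "nat \<Rightarrow> 'a::field" and \<beta> \<gamma> s :: 'a
  assumes i: "i \<in> {1..m}" and j: "j \<in> {1..m}" and k: "k \<in> {1..m}" and ik: "i \<noteq> k"
  shows "cross_entry m x y \<gamma> s i j * cross_entry m y x \<beta> s j k
    = (-1)^(m-k) * (x k + \<beta>) * ((\<Prod>l\<in>{m+1-i..m}. (y l + x i + s)) * (\<Prod>l\<in>{1..m-k}. (y l + x k + s)))
       / (diffs_below x i * diffs_above x m k)
      * ((y j + \<gamma>) * (\<Prod>l\<in>{1..m}-{i,k}. (x l + y j + s)) / node_weight y m j)"
proof -
  define g where "g l = x l + y j + s" for l
  define P1 where "P1 = (\<Prod>l\<in>{m+1-i..m}-{j}. (y l + x i + s))"
  define P2 where "P2 = (\<Prod>l\<in>{1..m-j}-{i}. g l)"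
  define P3 where "P3 = (\<Prod>l\<in>{m+1-j..m}-{k}. g l)"
  define P4 where "P4 = (\<Prod>l\<in>{1..m-k}-{j}. (y l + x k + s))"
  define U where "U = (\<Prod>l\<in>{m+1-i..m}. (y l + x i + s))"
  define V where "V = (\<Prod>l\<in>{1..m-k}. (y l + x k + s))"
  define W where "W = (\<Prod>l\<in>{1..m}-{i,k}. g l)"
  have hU: "U = P1 * (if j \<in> {m+1-i..m} then g i else 1)"
    unfolding U_def P1_def g_def by (subst prod_remove_if[of _ _ j]) (auto simp: add_ac)
  have hV: "V = P4 * (if j \<in> {1..m-k} then g k else 1)"
    unfolding V_def P4_def g_def by (subst prod_remove_if[of _ _ j]) (auto simp: add_ac)
  have h2: "P2 = (\<Prod>l\<in>{1..m-j}-{i,k}. g l) * (if k \<in> {1..m-j} then g k else 1)"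
  proof -
    have "{1..m-j}-{i}-{k} = {1..m-j}-{i,k}" by auto
    then show ?thesis unfolding P2_def using prod_remove_if[of "{1..m-j}-{i}" g k] ik by simp
  qed
  have h3: "P3 = (\<Prod>l\<in>{m+1-j..m}-{i,k}. g l) * (if i \<in> {m+1-j..m} then g i else 1)"
  proof -
    have "{m+1-j..m}-{k}-{i} = {m+1-j..m}-{i,k}" by auto
    then show ?thesis unfolding P3_def using prod_remove_if[of "{m+1-j..m}-{k}" g i] ik by simp
  qed
  have hW: "W = (\<Prod>l\<in>{1..m-j}-{i,k}. g l) * (\<Prod>l\<in>{m+1-j..m}-{i,k}. g l)"
    unfolding W_def using prod_split_reflected[of j m g "{i,k}"] j by simp
  have key: "P1 * P2 * (P3 * P4) = U * V * W"
    unfolding hU hV h2 h3 hW using reflected_interval_mem_iff[OF i j] reflected_interval_mem_iff[OF k j] by (simp add: algebra_simps)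
  have m1: "cross_entry m x y \<gamma> s i j = (-1)^(m-j) * (y j + \<gamma>) * (P1 * P2) / (diffs_below x i * diffs_above y m j)"
    unfolding cross_entry_def P1_def P2_def g_def ..
  have m2: "cross_entry m y x \<beta> s j k = (-1)^(m-k) * (x k + \<beta>) * (P3 * P4) / (diffs_below y j * diffs_above x m k)"
    unfolding cross_entry_def P3_def P4_def g_def ..
  have "cross_entry m x y \<gamma> s i j * cross_entry m y x \<beta> s j k
      = (-1)^(m-k) * (x k + \<beta>) * (P1 * P2 * (P3 * P4)) / (diffs_below x i * diffs_above x m k) * ((y j + \<gamma>) / ((-1)^(m-j) * diffs_below y j * diffs_above y m j))"
    unfolding m1 m2 by (simp add: divide_inverse inverse_mult_distrib inverse_neg_one_power mult_ac)
  also have "\<dots> = (-1)^(m-k) * (x k + \<beta>) * (U * V) / (diffs_below x i * diffs_above x m k) * ((y j + \<gamma>) * W / node_weight y m j)"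
    unfolding key node_weight_split[OF j] by (simp add: mult_ac)
  finally show ?thesis unfolding U_def V_def W_def g_def .
qed

lemma cross_entry_product_eq:
  fixes x y :: "nat \<Rightarrow> 'a::field" and \<beta> \<gamma> s :: 'a
  assumes i: "i \<in> {1..m}" and j: "j \<in> {1..m}"
  shows "cross_entry m x y \<gamma> s i j * cross_entry m y x \<beta> s j i
    = (x i + \<beta>) / node_weight x m i
      * ((y j + \<gamma>) * (\<Prod>l\<in>{1..m}-{i}. (x l + y j + s)) * (\<Prod>l\<in>{1..m}-{j}. (y l + x i + s)) / node_weight y m j)"
proof -
  define g where "g l = x l + y j + s" for l
  define h where "h l = y l + x i + s" for l
  define P1 where "P1 = (\<Prod>l\<in>{m+1-i..m}-{j}. h l)"
  define P2 where "P2 = (\<Prod>l\<in>{1..m-j}-{i}. g l)"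
  define P3 where "P3 = (\<Prod>l\<in>{m+1-j..m}-{i}. g l)"
  define P4 where "P4 = (\<Prod>l\<in>{1..m-i}-{j}. h l)"
  have k1: "P4 * P1 = (\<Prod>l\<in>{1..m}-{j}. h l)"
    unfolding P1_def P4_def using prod_split_reflected[of i m h "{j}"] i by simp
  have k2: "P2 * P3 = (\<Prod>l\<in>{1..m}-{i}. g l)"
    unfolding P2_def P3_def using prod_split_reflected[of j m g "{i}"] j by simp
  have m1: "cross_entry m x y \<gamma> s i j = (-1)^(m-j) * (y j + \<gamma>) * (P1 * P2) / (diffs_below x i * diffs_above y m j)"
    unfolding cross_entry_def P1_def P2_def g_def h_def ..
  have m2: "cross_entry m y x \<beta> s j i = (-1)^(m-i) * (x i + \<beta>) * (P3 * P4) / (diffs_below y j * diffs_above x m i)"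
    unfolding cross_entry_def P3_def P4_def g_def h_def ..
  have "cross_entry m x y \<gamma> s i j * cross_entry m y x \<beta> s j i
      = (x i + \<beta>) / ((-1)^(m-i) * diffs_below x i * diffs_above x m i)
      * ((y j + \<gamma>) * ((P2 * P3) * (P4 * P1)) / ((-1)^(m-j) * diffs_below y j * diffs_above y m j))"
    unfolding m1 m2 by (simp add: divide_inverse inverse_mult_distrib inverse_neg_one_power mult_ac)
  also have "\<dots> = (x i + \<beta>) / node_weight x m i
      * ((y j + \<gamma>) * (\<Prod>l\<in>{1..m}-{i}. (x l + y j + s)) * (\<Prod>l\<in>{1..m}-{j}. (y l + x i + s)) / node_weight y m j)"
    unfolding k1 k2 node_weight_split[OF i] node_weight_split[OF j] g_def h_def by (simp add: mult_ac)
  finally show ?thesis .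
qed

lemma top_entry_times_cross_entry:
  fixes x y :: "nat \<Rightarrow> 'a::field" and \<beta> \<gamma> s :: 'a
  assumes j: "j \<in> {1..m}" and k: "k \<in> {1..m}"
  shows "top_entry m y x \<gamma> s j * cross_entry m y x \<beta> s j k
    = top_entry m x y \<beta> s k * ((y j + \<gamma>) * (\<Prod>l\<in>{1..m}-{k}. (x l + y j + s)) / node_weight y m j)"
proof -
  define g where "g l = x l + y j + s" for l
  define Q0 where "Q0 = (\<Prod>l\<in>{1..m-j}. g l)"
  define P3 where "P3 = (\<Prod>l\<in>{m+1-j..m}-{k}. g l)"
  define P4 where "P4 = (\<Prod>l\<in>{1..m-k}-{j}. (y l + x k + s))"
  define V where "V = (\<Prod>l\<in>{1..m-k}. (y l + x k + s))"
  define W where "W = (\<Prod>l\<in>{1..m}-{k}. g l)"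
  have hQ: "Q0 = (\<Prod>l\<in>{1..m-j}-{k}. g l) * (if k \<in> {1..m-j} then g k else 1)"
    unfolding Q0_def by (rule prod_remove_if) simp
  have hV: "V = P4 * (if j \<in> {1..m-k} then g k else 1)"
    unfolding V_def P4_def g_def by (subst prod_remove_if[of _ _ j]) (auto simp: add_ac)
  have hW: "W = (\<Prod>l\<in>{1..m-j}-{k}. g l) * P3"
    unfolding W_def P3_def using prod_split_reflected[of j m g "{k}"] j by simp
  have key: "Q0 * (P3 * P4) = V * W"
    unfolding hQ hV hW using reflected_interval_mem_iff[OF k j] by (simp add: algebra_simps)
  have m1: "top_entry m y x \<gamma> s j = (-1)^(m-j) * (y j + \<gamma>) * Q0 / diffs_above y m j"
    unfolding top_entry_def Q0_def g_def ..
  have m2: "cross_entry m y x \<beta> s j k = (-1)^(m-k) * (x k + \<beta>) * (P3 * P4) / (diffs_below y j * diffs_above x m k)"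
    unfolding cross_entry_def P3_def P4_def g_def ..
  have m3: "top_entry m x y \<beta> s k = (-1)^(m-k) * (x k + \<beta>) * V / diffs_above x m k"
    unfolding top_entry_def V_def ..
  have "top_entry m y x \<gamma> s j * cross_entry m y x \<beta> s j k
      = (-1)^(m-k) * (x k + \<beta>) / diffs_above x m k * ((y j + \<gamma>) * (Q0 * (P3 * P4)) / ((-1)^(m-j) * diffs_below y j * diffs_above y m j))"
    unfolding m1 m2 by (simp add: divide_inverse inverse_mult_distrib inverse_neg_one_power mult_ac)
  also have "\<dots> = top_entry m x y \<beta> s k * ((y j + \<gamma>) * (\<Prod>l\<in>{1..m}-{k}. (x l + y j + s)) / node_weight y m j)"
    unfolding key m3 node_weight_split[OF j] W_def g_def by (simp add: divide_inverse mult_ac)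
  finally show ?thesis .
qed

lemma cross_entry_times_left_entry:
  fixes x y :: "nat \<Rightarrow> 'a::field" and \<beta> \<gamma> s :: 'a
  assumes i: "i \<in> {1..m}" and j: "j \<in> {1..m}"
  shows "cross_entry m x y \<gamma> s i j * left_entry m y x s j
    = left_entry m x y s i * ((y j + \<gamma>) * (\<Prod>l\<in>{1..m}-{i}. (x l + y j + s)) / node_weight y m j)"
proof -
  define g where "g l = x l + y j + s" for l
  define P1 where "P1 = (\<Prod>l\<in>{m+1-i..m}-{j}. (y l + x i + s))"
  define P2 where "P2 = (\<Prod>l\<in>{1..m-j}-{i}. g l)"
  define Q where "Q = (\<Prod>l\<in>{m+1-j..m}. g l)"
  define U where "U = (\<Prod>l\<in>{m+1-i..m}. (y l + x i + s))"
  define W where "W = (\<Prod>l\<in>{1..m}-{i}. g l)"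
  have hU: "U = P1 * (if j \<in> {m+1-i..m} then g i else 1)"
    unfolding U_def P1_def g_def by (subst prod_remove_if[of _ _ j]) (auto simp: add_ac)
  have hQ: "Q = (\<Prod>l\<in>{m+1-j..m}-{i}. g l) * (if i \<in> {m+1-j..m} then g i else 1)"
    unfolding Q_def by (rule prod_remove_if) simp
  have hW: "W = P2 * (\<Prod>l\<in>{m+1-j..m}-{i}. g l)"
    unfolding W_def P2_def using prod_split_reflected[of j m g "{i}"] j by simp
  have key: "(P1 * P2) * Q = U * W"
    unfolding hU hQ hW using reflected_interval_mem_iff[OF i j] by (simp add: algebra_simps)
  have m1: "cross_entry m x y \<gamma> s i j = (-1)^(m-j) * (y j + \<gamma>) * (P1 * P2) / (diffs_below x i * diffs_above y m j)"
    unfolding cross_entry_def P1_def P2_def g_def ..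
  have m2: "left_entry m y x s j = - Q / diffs_below y j"
    unfolding left_entry_def Q_def g_def ..
  have m3: "left_entry m x y s i = - U / diffs_below x i"
    unfolding left_entry_def U_def ..
  have "cross_entry m x y \<gamma> s i j * left_entry m y x s j
      = - (1 / diffs_below x i) * ((y j + \<gamma>) * ((P1 * P2) * Q) / ((-1)^(m-j) * diffs_below y j * diffs_above y m j))"
    unfolding m1 m2 by (simp add: divide_inverse inverse_mult_distrib inverse_neg_one_power mult_ac)
  also have "\<dots> = left_entry m x y s i * ((y j + \<gamma>) * (\<Prod>l\<in>{1..m}-{i}. (x l + y j + s)) / node_weight y m j)"
    unfolding key m3 node_weight_split[OF j] W_def g_def by (simp add: divide_inverse mult_ac)
  finally show ?thesis .
qed

lemma top_entry_times_left_entry: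
  fixes x y :: "nat \<Rightarrow> 'a::field" and \<beta> s :: 'a
  assumes j: "j \<in> {1..m}"
  shows "top_entry m x y \<beta> s j * left_entry m x y s j = - ((x j + \<beta>) * (\<Prod>l\<in>{1..m}. (y l + x j + s)) / node_weight x m j)"
proof -
  define h where "h l = y l + x j + s" for l
  have k: "(\<Prod>l\<in>{1..m-j}. h l) * (\<Prod>l\<in>{m+1-j..m}. h l) = (\<Prod>l\<in>{1..m}. h l)"
    using prod_split_reflected[of j m h "{}"] j by simp
  have "top_entry m x y \<beta> s j * left_entry m x y s j
     = - ((x j + \<beta>) * ((\<Prod>l\<in>{1..m-j}. h l) * (\<Prod>l\<in>{m+1-j..m}. h l)) / ((-1)^(m-j) * diffs_below x j * diffs_above x m j))"
    unfolding top_entry_def left_entry_def h_def by (simp add: divide_inverse inverse_mult_distrib inverse_neg_one_power mult_ac)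
  also have "\<dots> = - ((x j + \<beta>) * (\<Prod>l\<in>{1..m}. (y l + x j + s)) / node_weight x m j)"
    unfolding k unfolding node_weight_split[OF j] h_def ..
  finally show ?thesis .
qed

lemma sum_diff_singleton_shifted:
  fixes x :: "nat \<Rightarrow> 'a::field"
  assumes k: "k \<in> {1..m}"
  shows "(\<Sum>l\<in>{1..m}-{k}. (x l + s)) = (\<Sum>l=1..m. x l) - x k + (of_nat m - 1) * s"
proof -
  have "(\<Sum>l\<in>{1..m}-{k}. (x l + s)) = (\<Sum>l=1..m. (x l + s)) - (x k + s)"
    by (subst sum_diff1) (use k in \<open>simp_all add: algebra_simps\<close>)
  also have "\<dots> = (\<Sum>l=1..m. x l) - x k + (of_nat m - 1) * s"
    by (simp add: sum.distrib algebra_simps)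
  finally show ?thesis .
qed

lemma cross_block_identity:
  assumes i: "i \<in> {1..m}" and k: "k \<in> {1..m}"
  shows "left_entry m x y s i * top_entry m y x \<gamma> s k + cross_entry m x y \<gamma> s i k * (y k + x i + s) = 0"
proof -
  define U where "U = (\<Prod>l\<in>{m+1-i..m}. (y l + x i + s))"
  define V where "V = (\<Prod>l\<in>{1..m-k}. (x l + y k + s))"
  define U' where "U' = (\<Prod>l\<in>{m+1-i..m}-{k}. (y l + x i + s))"
  define V' where "V' = (\<Prod>l\<in>{1..m-k}-{i}. (x l + y k + s))"
  have key: "U * V = U' * V' * (y k + x i + s)"
  proof (cases "k \<in> {m+1-i..m}")
    case True
    then have "i \<notin> {1..m-k}" using i k by auto
    then have "V' = V" unfolding V_def V'_def by simp
    moreover have "U = (y k + x i + s) * U'" unfolding U_def U'_def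
      using True by (intro prod.remove) auto
    ultimately show ?thesis by (simp add: algebra_simps)
  next
    case False
    then have "i \<in> {1..m-k}" using i k by auto
    then have "V = (x i + y k + s) * V'" unfolding V_def V'_def by (intro prod.remove) auto
    moreover have "U' = U" unfolding U_def U'_def using False by simp
    ultimately show ?thesis by (simp add: algebra_simps)
  qed
  have "left_entry m x y s i * top_entry m y x \<gamma> s k = - ((-1)^(m-k) * (y k + \<gamma>) * (U * V) / (diffs_below x i * diffs_above y m k))"
    unfolding left_entry_def top_entry_def U_def V_def by (simp add: field_simps)
  moreover have "cross_entry m x y \<gamma> s i k * (y k + x i + s) = (-1)^(m-k) * (y k + \<gamma>) * (U' * V' * (y k + x i + s)) / (diffs_below x i * diffs_above y m k)"
    unfolding cross_entry_def U'_def V'_def by (simp add: field_simps)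
  ultimately show ?thesis using key by simp
qed


lemma diag_block_identity:
  fixes x y :: "nat \<Rightarrow> 'a::field" and \<beta> \<gamma> s a1 a2 :: 'a
  assumes ix: "inj_on x {1..m}" and iy: "inj_on y {1..m}" and m: "m \<ge> 2"
    and i: "i \<in> {1..m}" and k: "k \<in> {1..m}" and s: "s = \<beta> + \<gamma> + a1 - a2"
  shows "left_entry m x y s i * top_entry m x y \<beta> s k + (\<Sum>j=1..m. cross_entry m x y \<gamma> s i j * cross_entry m y x \<beta> s j k)
         + (if i = k then (x i + \<beta>) * (x i + \<beta> + a1 - a2) else 0) = 0"
proof (cases "i = k")
  case False
  define K where "K = (-1)^(m-k) * (x k + \<beta>) * ((\<Prod>l\<in>{m+1-i..m}. (y l + x i + s)) * (\<Prod>l\<in>{1..m-k}. (y l + x k + s)))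
       / (diffs_below x i * diffs_above x m k)"
  have "(\<Sum>j=1..m. cross_entry m x y \<gamma> s i j * cross_entry m y x \<beta> s j k)
      = (\<Sum>j=1..m. K * ((y j + \<gamma>) * (\<Prod>l\<in>{1..m}-{i,k}. (x l + y j + s)) / node_weight y m j))"
    unfolding K_def by (intro sum.cong refl cross_entry_product_ne[OF i _ k False]) auto
  also have "\<dots> = K" unfolding sum_distrib_left[symmetric] node_sum_omit_two[OF iy m i k False] by simp
  finally have "(\<Sum>j=1..m. cross_entry m x y \<gamma> s i j * cross_entry m y x \<beta> s j k) = K" .
  moreover have "left_entry m x y s i * top_entry m x y \<beta> s k = - K"
    unfolding left_entry_def top_entry_def K_def by (simp add: field_simps)
  ultimately show ?thesis using False by simp
next
  case True
  then have k: "k = i" by simp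
  have w: "node_weight x m i \<noteq> 0" by (rule node_weight_nonzero[OF ix i])
  define Uf where "Uf = (\<Prod>l\<in>{1..m}. (y l + x i + s))"
  have "(\<Sum>j=1..m. cross_entry m x y \<gamma> s i j * cross_entry m y x \<beta> s j i)
      = (\<Sum>j=1..m. (x i + \<beta>) / node_weight x m i * ((y j + \<gamma>) * (\<Prod>l\<in>{1..m}-{i}. (x l + y j + s))
           * (\<Prod>l\<in>{1..m}-{j}. (y l + x i + s)) / node_weight y m j))"
    by (intro sum.cong refl cross_entry_product_eq[OF i]) auto
  also have "\<dots> = (x i + \<beta>) / node_weight x m i * ((\<gamma> - x i - s) * node_weight x m i + Uf)"
    unfolding sum_distrib_left[symmetric] node_sum_omit_one_interpolated[OF iy m i] Uf_def ..
  also have "\<dots> = (x i + \<beta>) * (\<gamma> - x i - s) + (x i + \<beta>) * Uf / node_weight x m i"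
    using w by (simp add: field_simps)
  finally have S: "(\<Sum>j=1..m. cross_entry m x y \<gamma> s i j * cross_entry m y x \<beta> s j i)
      = (x i + \<beta>) * (\<gamma> - x i - s) + (x i + \<beta>) * Uf / node_weight x m i" .
  have CR: "left_entry m x y s i * top_entry m x y \<beta> s i = - ((x i + \<beta>) * Uf / node_weight x m i)"
    unfolding Uf_def using top_entry_times_left_entry[OF i, of x y \<beta> s] by (simp add: mult.commute)
  have "left_entry m x y s i * top_entry m x y \<beta> s k + (\<Sum>j=1..m. cross_entry m x y \<gamma> s i j * cross_entry m y x \<beta> s j k)
         + (if i = k then (x i + \<beta>) * (x i + \<beta> + a1 - a2) else 0)
       = (x i + \<beta>) * (\<gamma> - x i - s + (x i + \<beta> + a1 - a2))"
    unfolding k if_P[OF refl] CR S by (simp add: algebra_simps)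
  also have "\<dots> = 0" unfolding s by simp
  finally show ?thesis .
qed

lemma top_border_identity:
  fixes x y :: "nat \<Rightarrow> 'a::field" and \<beta> \<gamma> s a1 a2 d :: 'a
  assumes iy: "inj_on y {1..m}" and m: "m \<ge> 2" and k: "k \<in> {1..m}"
    and d: "d = a2 - \<beta> - \<gamma> - (\<Sum>l=1..m. x l) - (\<Sum>l=1..m. y l) - (of_nat m - 1) * s"
  shows "d * top_entry m x y \<beta> s k + top_entry m x y \<beta> s k * (x k + \<beta> + a1)
     + (\<Sum>j=1..m. top_entry m y x \<gamma> s j * cross_entry m y x \<beta> s j k) - (a1 + a2) * top_entry m x y \<beta> s k = 0"
proof -
  have "(\<Sum>j=1..m. top_entry m y x \<gamma> s j * cross_entry m y x \<beta> s j k)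
      = (\<Sum>j=1..m. top_entry m x y \<beta> s k * ((y j + \<gamma>) * (\<Prod>l\<in>{1..m}-{k}. (x l + y j + s)) / node_weight y m j))"
    by (intro sum.cong refl top_entry_times_cross_entry[OF _ k]) auto
  also have "\<dots> = top_entry m x y \<beta> s k * (\<gamma> + ((\<Sum>l=1..m. x l) - x k + (of_nat m - 1) * s) + (\<Sum>l=1..m. y l))"
    unfolding sum_distrib_left[symmetric] node_sum_omit_one[OF iy m k] sum_diff_singleton_shifted[OF k] ..
  finally show ?thesis unfolding d by (simp add: algebra_simps)
qed

lemma left_border_identity:
  fixes x y :: "nat \<Rightarrow> 'a::field" and \<beta> \<gamma> s a1 a2 d :: 'a
  assumes iy: "inj_on y {1..m}" and m: "m \<ge> 2" and i: "i \<in> {1..m}"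
    and d: "d = a2 - \<beta> - \<gamma> - (\<Sum>l=1..m. x l) - (\<Sum>l=1..m. y l) - (of_nat m - 1) * s"
  shows "left_entry m x y s i * d + (x i + \<beta> + a1) * left_entry m x y s i
     + (\<Sum>j=1..m. cross_entry m x y \<gamma> s i j * left_entry m y x s j) - (a1 + a2) * left_entry m x y s i = 0"
proof -
  have "(\<Sum>j=1..m. cross_entry m x y \<gamma> s i j * left_entry m y x s j)
      = (\<Sum>j=1..m. left_entry m x y s i * ((y j + \<gamma>) * (\<Prod>l\<in>{1..m}-{i}. (x l + y j + s)) / node_weight y m j))"
    by (intro sum.cong refl cross_entry_times_left_entry[OF i]) auto
  also have "\<dots> = left_entry m x y s i * (\<gamma> + ((\<Sum>l=1..m. x l) - x i + (of_nat m - 1) * s) + (\<Sum>l=1..m. y l))"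
    unfolding sum_distrib_left[symmetric] node_sum_omit_one[OF iy m i] sum_diff_singleton_shifted[OF i] ..
  finally show ?thesis unfolding d by (simp add: algebra_simps)
qed

lemma corner_identity:
  fixes x y :: "nat \<Rightarrow> 'a::field_char_0" and \<beta> \<gamma> s a1 a2 d :: 'a
  assumes ix: "inj_on x {1..m}" and iy: "inj_on y {1..m}" and m: "m \<ge> 2"
    and s: "s = \<beta> + \<gamma> + a1 - a2"
    and d: "d = a2 - \<beta> - \<gamma> - (\<Sum>l=1..m. x l) - (\<Sum>l=1..m. y l) - (of_nat m - 1) * s"
  shows "d * d + (\<Sum>j=1..m. top_entry m x y \<beta> s j * left_entry m x y s j)
     + (\<Sum>j=1..m. top_entry m y x \<gamma> s j * left_entry m y x s j) - (a1 + a2) * d + a1 * a2 = 0"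
proof -
  define T where "T = (\<Sum>l=1..m. x l + (y l + s))"
  define X2 where "X2 = (\<Sum>l=1..m. (x l)^2)"
  define Y2 where "Y2 = (\<Sum>l=1..m. (y l)^2)"
  define XS where "XS = (\<Sum>l=1..m. (x l + s)^2)"
  define YS where "YS = (\<Sum>l=1..m. (y l + s)^2)"
  have T': "T = (\<Sum>l=1..m. y l + (x l + s))" unfolding T_def by (intro sum.cong) auto
  have "T = (\<Sum>l=1..m. x l) + (\<Sum>l=1..m. y l) + of_nat m * s" unfolding T_def by (simp add: sum.distrib)
  then have d_T: "d = a1 - T" unfolding d s by (simp add: algebra_simps)
  have YS: "YS = 2 * s * T + X2 + Y2 - XS"
    unfolding T_def X2_def Y2_def XS_def YS_def
    by (simp add: power2_eq_square algebra_simps sum.distrib sum_distrib_left)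
  define SA where "SA = (\<Sum>j=1..m. top_entry m x y \<beta> s j * left_entry m x y s j)"
  define SB where "SB = (\<Sum>j=1..m. top_entry m y x \<gamma> s j * left_entry m y x s j)"
  have "2 * SA = - (T * (T + 2 * \<beta>) + X2 - YS)"
    unfolding SA_def X2_def YS_def
    unfolding node_sum_full[OF ix m, where u = "\<lambda>l. y l + s" and b = \<beta>, folded T_def, symmetric]
    by (simp add: top_entry_times_left_entry sum_negf add_ac)
  then have SA: "SA = - (T * (T + 2 * \<beta>) + X2 - YS) / 2" by (simp add: mult.commute)
  have "2 * SB = - (T * (T + 2 * \<gamma>) + Y2 - XS)"
    unfolding SB_def Y2_def XS_def
    unfolding node_sum_full[OF iy m, where u = "\<lambda>l. x l + s" and b = \<gamma>, folded T', symmetric]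
    by (simp add: top_entry_times_left_entry sum_negf add_ac)
  then have SB: "SB = - (T * (T + 2 * \<gamma>) + Y2 - XS) / 2" by (simp add: mult.commute)
  show ?thesis
    unfolding SA_def[symmetric] SB_def[symmetric] unfolding SA SB d_T YS unfolding s
    by (simp add: field_simps)
qed

section \<open>The quadratic relation for the bordered matrix\<close>

definition bordered_entry ::
  "nat \<Rightarrow> (nat \<Rightarrow> 'a::field) \<Rightarrow> (nat \<Rightarrow> 'a) \<Rightarrow> 'a \<Rightarrow> 'a \<Rightarrow> 'a \<Rightarrow> 'a \<Rightarrow> 'a \<Rightarrow> nat \<Rightarrow> nat \<Rightarrow> 'a" where
  "bordered_entry m x y \<beta> \<gamma> a1 s d r q =
    (if r = 0 then
       (if q = 0 then d else if q \<le> m then top_entry m x y \<beta> s q else top_entry m y x \<gamma> s (q - m))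
     else if r \<le> m then
       (if q = 0 then left_entry m x y s r
        else if q \<le> m then (if r = q then x r + \<beta> + a1 else 0)
        else cross_entry m x y \<gamma> s r (q - m))
     else
       (if q = 0 then left_entry m y x s (r - m)
        else if q \<le> m then cross_entry m y x \<beta> s (r - m) q
        else (if r = q then y (r - m) + \<gamma> + a1 else 0)))"

definition bordered_mat ::
  "nat \<Rightarrow> (nat \<Rightarrow> 'a::field) \<Rightarrow> (nat \<Rightarrow> 'a) \<Rightarrow> 'a \<Rightarrow> 'a \<Rightarrow> 'a \<Rightarrow> 'a \<Rightarrow> 'a \<Rightarrow> 'a mat" where
  "bordered_mat m x y \<beta> \<gamma> a1 s d =
    mat (2*m+1) (2*m+1) (\<lambda>(r, q). bordered_entry m x y \<beta> \<gamma> a1 s d r q)"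

lemma bordered_entry_simps:
  "bordered_entry m x y \<beta> \<gamma> a1 s d 0 0 = d"
  "0 < q \<Longrightarrow> q \<le> m \<Longrightarrow> bordered_entry m x y \<beta> \<gamma> a1 s d 0 q = top_entry m x y \<beta> s q"
  "m < q \<Longrightarrow> bordered_entry m x y \<beta> \<gamma> a1 s d 0 q = top_entry m y x \<gamma> s (q - m)"
  "0 < r \<Longrightarrow> r \<le> m \<Longrightarrow> bordered_entry m x y \<beta> \<gamma> a1 s d r 0 = left_entry m x y s r"
  "m < r \<Longrightarrow> bordered_entry m x y \<beta> \<gamma> a1 s d r 0 = left_entry m y x s (r - m)"
  "0 < r \<Longrightarrow> r \<le> m \<Longrightarrow> 0 < q \<Longrightarrow> q \<le> m \<Longrightarrow>
    bordered_entry m x y \<beta> \<gamma> a1 s d r q = (if r = q then x r + \<beta> + a1 else 0)"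
  "0 < r \<Longrightarrow> r \<le> m \<Longrightarrow> m < q \<Longrightarrow>
    bordered_entry m x y \<beta> \<gamma> a1 s d r q = cross_entry m x y \<gamma> s r (q - m)"
  "m < r \<Longrightarrow> 0 < q \<Longrightarrow> q \<le> m \<Longrightarrow>
    bordered_entry m x y \<beta> \<gamma> a1 s d r q = cross_entry m y x \<beta> s (r - m) q"
  "m < r \<Longrightarrow> m < q \<Longrightarrow>
    bordered_entry m x y \<beta> \<gamma> a1 s d r q = (if r = q then y (r - m) + \<gamma> + a1 else 0)"
  unfolding bordered_entry_def by auto

lemma bordered_index_cases [consumes 1, case_names corner x_block y_block]:
  fixes r m :: nat
  assumes "r < 2*m+1"
  obtains (corner) "r = 0"
    | (x_block) i where "i \<in> {1..m}" "r = i"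
    | (y_block) i where "i \<in> {1..m}" "r = m + i"
proof (cases "r \<le> m")
  case False
  then show ?thesis using assms y_block[of "r - m"] by auto
qed (use corner x_block in \<open>cases "r = 0"; auto\<close>)

lemma sum_bordered_index:
  fixes f :: "nat \<Rightarrow> 'a::comm_monoid_add"
  shows "(\<Sum>t<2*m+1. f t) = f 0 + (\<Sum>t=1..m. f t) + (\<Sum>t=1..m. f (m + t))"
proof -
  have "{..<2*m+1} = insert 0 ({1..m} \<union> (\<lambda>t. m + t) ` {1..m})"
    by (auto simp: image_iff intro: bexI[of _ "_ - m"])
  moreover have "sum f ((\<lambda>t. m + t) ` {1..m}) = (\<Sum>t=1..m. f (m + t))"
    by (subst sum.reindex) auto
  ultimately show ?thesis
    by (simp add: sum.union_disjoint add.assoc)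
qed

lemma sum_eq_single_term:
  assumes "finite A" "k \<in> A" "\<And>t. t \<in> A \<Longrightarrow> t \<noteq> k \<Longrightarrow> g t = 0"
  shows "sum g A = g k"
  using assms by (simp add: sum.remove sum.neutral)

locale bordered_quadratic =
  fixes m :: nat and x y :: "nat \<Rightarrow> 'a::field_char_0" and \<beta> \<gamma> a1 a2 s d :: 'a
  assumes inj_x: "inj_on x {1..m}" and inj_y: "inj_on y {1..m}" and m: "m \<ge> 2"
    and s_eq: "s = \<beta> + \<gamma> + a1 - a2"
    and d_eq: "d = a2 - \<beta> - \<gamma> - (\<Sum>l=1..m. x l) - (\<Sum>l=1..m. y l) - (of_nat m - 1) * s"
begin

abbreviation "G \<equiv> bordered_entry m x y \<beta> \<gamma> a1 s d"

lemma s_eq_swapped: "s = \<gamma> + \<beta> + a1 - a2"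
  using s_eq by simp

lemma d_eq_swapped: "d = a2 - \<gamma> - \<beta> - (\<Sum>l=1..m. y l) - (\<Sum>l=1..m. x l) - (of_nat m - 1) * s"
  using d_eq by simp

lemma quadratic_entry_corner:
  "(\<Sum>t<2*m+1. G 0 t * G t 0) - (a1 + a2) * G 0 0 + a1 * a2 = 0"
proof -
  have X: "(\<Sum>t=1..m. G 0 t * G t 0) = (\<Sum>j=1..m. top_entry m x y \<beta> s j * left_entry m x y s j)"
    and Y: "(\<Sum>t=1..m. G 0 (m + t) * G (m + t) 0) = (\<Sum>j=1..m. top_entry m y x \<gamma> s j * left_entry m y x s j)"
    by (auto intro!: sum.cong simp: bordered_entry_simps)
  show ?thesis
    unfolding sum_bordered_index X Y using corner_identity[OF inj_x inj_y m s_eq d_eq]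
    by (simp add: bordered_entry_simps)
qed

lemma quadratic_entry_top_x:
  assumes k: "k \<in> {1..m}"
  shows "(\<Sum>t<2*m+1. G 0 t * G t k) - (a1 + a2) * G 0 k = 0"
proof -
  have X: "(\<Sum>t=1..m. G 0 t * G t k) = G 0 k * G k k"
    by (rule sum_eq_single_term) (use k in \<open>simp_all add: bordered_entry_simps\<close>)
  have Y: "(\<Sum>t=1..m. G 0 (m + t) * G (m + t) k) = (\<Sum>j=1..m. top_entry m y x \<gamma> s j * cross_entry m y x \<beta> s j k)"
    by (rule sum.cong) (use k in \<open>simp_all add: bordered_entry_simps\<close>)
  show ?thesis
    unfolding sum_bordered_index X Y using top_border_identity[OF inj_y m k d_eq] k
    by (simp add: bordered_entry_simps algebra_simps)
qed

lemma quadratic_entry_top_y: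
  assumes k: "k \<in> {1..m}"
  shows "(\<Sum>t<2*m+1. G 0 t * G t (m + k)) - (a1 + a2) * G 0 (m + k) = 0"
proof -
  have X: "(\<Sum>t=1..m. G 0 t * G t (m + k)) = (\<Sum>j=1..m. top_entry m x y \<beta> s j * cross_entry m x y \<gamma> s j k)"
    by (rule sum.cong) (use k in \<open>simp_all add: bordered_entry_simps\<close>)
  have Y: "(\<Sum>t=1..m. G 0 (m + t) * G (m + t) (m + k)) = G 0 (m + k) * G (m + k) (m + k)"
    by (rule sum_eq_single_term) (use k in \<open>simp_all add: bordered_entry_simps\<close>)
  show ?thesis
    unfolding sum_bordered_index X Y using top_border_identity[OF inj_x m k d_eq_swapped] k
    by (simp add: bordered_entry_simps algebra_simps)
qed

lemma quadratic_entry_x_left: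
  assumes i: "i \<in> {1..m}"
  shows "(\<Sum>t<2*m+1. G i t * G t 0) - (a1 + a2) * G i 0 = 0"
proof -
  have X: "(\<Sum>t=1..m. G i t * G t 0) = G i i * G i 0"
    by (rule sum_eq_single_term) (use i in \<open>simp_all add: bordered_entry_simps\<close>)
  have Y: "(\<Sum>t=1..m. G i (m + t) * G (m + t) 0) = (\<Sum>j=1..m. cross_entry m x y \<gamma> s i j * left_entry m y x s j)"
    by (rule sum.cong) (use i in \<open>simp_all add: bordered_entry_simps\<close>)
  show ?thesis
    unfolding sum_bordered_index X Y using left_border_identity[OF inj_y m i d_eq] i
    by (simp add: bordered_entry_simps algebra_simps)
qed

lemma quadratic_entry_y_left:
  assumes i: "i \<in> {1..m}"
  shows "(\<Sum>t<2*m+1. G (m + i) t * G t 0) - (a1 + a2) * G (m + i) 0 = 0"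
proof -
  have X: "(\<Sum>t=1..m. G (m + i) t * G t 0) = (\<Sum>j=1..m. cross_entry m y x \<beta> s i j * left_entry m x y s j)"
    by (rule sum.cong) (use i in \<open>simp_all add: bordered_entry_simps\<close>)
  have Y: "(\<Sum>t=1..m. G (m + i) (m + t) * G (m + t) 0) = G (m + i) (m + i) * G (m + i) 0"
    by (rule sum_eq_single_term) (use i in \<open>simp_all add: bordered_entry_simps\<close>)
  show ?thesis
    unfolding sum_bordered_index X Y using left_border_identity[OF inj_x m i d_eq_swapped] i
    by (simp add: bordered_entry_simps algebra_simps)
qed

lemma quadratic_entry_xy:
  assumes i: "i \<in> {1..m}" and k: "k \<in> {1..m}"
  shows "(\<Sum>t<2*m+1. G i t * G t (m + k)) - (a1 + a2) * G i (m + k) = 0"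
proof -
  have X: "(\<Sum>t=1..m. G i t * G t (m + k)) = G i i * G i (m + k)"
    by (rule sum_eq_single_term) (use i k in \<open>simp_all add: bordered_entry_simps\<close>)
  have Y: "(\<Sum>t=1..m. G i (m + t) * G (m + t) (m + k)) = G i (m + k) * G (m + k) (m + k)"
    by (rule sum_eq_single_term) (use i k in \<open>simp_all add: bordered_entry_simps\<close>)
  have "(\<Sum>t<2*m+1. G i t * G t (m + k)) - (a1 + a2) * G i (m + k)
     = left_entry m x y s i * top_entry m y x \<gamma> s k
       + cross_entry m x y \<gamma> s i k * ((x i + \<beta> + a1) + (y k + \<gamma> + a1) - (a1 + a2))"
    unfolding sum_bordered_index X Y using i k by (simp add: bordered_entry_simps algebra_simps)
  also have "(x i + \<beta> + a1) + (y k + \<gamma> + a1) - (a1 + a2) = y k + x i + s"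
    using s_eq by simp
  also have "left_entry m x y s i * top_entry m y x \<gamma> s k + cross_entry m x y \<gamma> s i k * (y k + x i + s) = 0"
    by (rule cross_block_identity[OF i k])
  finally show ?thesis .
qed

lemma quadratic_entry_yx:
  assumes i: "i \<in> {1..m}" and k: "k \<in> {1..m}"
  shows "(\<Sum>t<2*m+1. G (m + i) t * G t k) - (a1 + a2) * G (m + i) k = 0"
proof -
  have X: "(\<Sum>t=1..m. G (m + i) t * G t k) = G (m + i) k * G k k"
    by (rule sum_eq_single_term) (use i k in \<open>simp_all add: bordered_entry_simps\<close>)
  have Y: "(\<Sum>t=1..m. G (m + i) (m + t) * G (m + t) k) = G (m + i) (m + i) * G (m + i) k"
    by (rule sum_eq_single_term) (use i k in \<open>simp_all add: bordered_entry_simps\<close>)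
  have "(\<Sum>t<2*m+1. G (m + i) t * G t k) - (a1 + a2) * G (m + i) k
     = left_entry m y x s i * top_entry m x y \<beta> s k
       + cross_entry m y x \<beta> s i k * ((y i + \<gamma> + a1) + (x k + \<beta> + a1) - (a1 + a2))"
    unfolding sum_bordered_index X Y using i k by (simp add: bordered_entry_simps algebra_simps)
  also have "(y i + \<gamma> + a1) + (x k + \<beta> + a1) - (a1 + a2) = x k + y i + s"
    using s_eq by simp
  also have "left_entry m y x s i * top_entry m x y \<beta> s k + cross_entry m y x \<beta> s i k * (x k + y i + s) = 0"
    by (rule cross_block_identity[OF i k])
  finally show ?thesis .
qed

lemma quadratic_entry_xx:
  assumes i: "i \<in> {1..m}" and k: "k \<in> {1..m}"
  shows "(\<Sum>t<2*m+1. G i t * G t k) - (a1 + a2) * G i k + (if i = k then a1 * a2 else 0) = 0"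
proof -
  have X: "(\<Sum>t=1..m. G i t * G t k) = G i i * G i k"
    by (rule sum_eq_single_term) (use i k in \<open>simp_all add: bordered_entry_simps\<close>)
  have Y: "(\<Sum>t=1..m. G i (m + t) * G (m + t) k) = (\<Sum>j=1..m. cross_entry m x y \<gamma> s i j * cross_entry m y x \<beta> s j k)"
    by (rule sum.cong) (use i k in \<open>simp_all add: bordered_entry_simps\<close>)
  have "(\<Sum>t<2*m+1. G i t * G t k) - (a1 + a2) * G i k + (if i = k then a1 * a2 else 0)
     = left_entry m x y s i * top_entry m x y \<beta> s k
       + (\<Sum>j=1..m. cross_entry m x y \<gamma> s i j * cross_entry m y x \<beta> s j k)
       + (if i = k then (x i + \<beta>) * (x i + \<beta> + a1 - a2) else 0)"
    unfolding sum_bordered_index X Y using i k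
    by (cases "i = k") (simp_all add: bordered_entry_simps algebra_simps)
  also have "\<dots> = 0" by (rule diag_block_identity[OF inj_x inj_y m i k s_eq])
  finally show ?thesis .
qed

lemma quadratic_entry_yy:
  assumes i: "i \<in> {1..m}" and k: "k \<in> {1..m}"
  shows "(\<Sum>t<2*m+1. G (m + i) t * G t (m + k)) - (a1 + a2) * G (m + i) (m + k)
    + (if i = k then a1 * a2 else 0) = 0"
proof -
  have X: "(\<Sum>t=1..m. G (m + i) t * G t (m + k)) = (\<Sum>j=1..m. cross_entry m y x \<beta> s i j * cross_entry m x y \<gamma> s j k)"
    by (rule sum.cong) (use i k in \<open>simp_all add: bordered_entry_simps\<close>)
  have Y: "(\<Sum>t=1..m. G (m + i) (m + t) * G (m + t) (m + k)) = G (m + i) (m + i) * G (m + i) (m + k)"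
    by (rule sum_eq_single_term) (use i k in \<open>simp_all add: bordered_entry_simps\<close>)
  have "(\<Sum>t<2*m+1. G (m + i) t * G t (m + k)) - (a1 + a2) * G (m + i) (m + k) + (if i = k then a1 * a2 else 0)
     = left_entry m y x s i * top_entry m y x \<gamma> s k
       + (\<Sum>j=1..m. cross_entry m y x \<beta> s i j * cross_entry m x y \<gamma> s j k)
       + (if i = k then (y i + \<gamma>) * (y i + \<gamma> + a1 - a2) else 0)"
    unfolding sum_bordered_index X Y using i k
    by (cases "i = k") (simp_all add: bordered_entry_simps algebra_simps)
  also have "\<dots> = 0" by (rule diag_block_identity[OF inj_y inj_x m i k s_eq_swapped])
  finally show ?thesis .
qed

lemma bordered_entry_quadratic:
  assumes r: "r < 2*m+1" and q: "q < 2*m+1"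
  shows "(\<Sum>t<2*m+1. G r t * G t q) + (if r = q then a1 * a2 else 0) = (a1 + a2) * G r q"
proof -
  have "(\<Sum>t<2*m+1. G r t * G t q) - (a1 + a2) * G r q + (if r = q then a1 * a2 else 0) = 0"
    using r
  proof (cases rule: bordered_index_cases)
    case corner
    show ?thesis
      using q quadratic_entry_corner quadratic_entry_top_x quadratic_entry_top_y
      unfolding corner by (cases rule: bordered_index_cases) (simp_all del: sum.lessThan_Suc)
  next
    case (x_block i)
    show ?thesis
      using q x_block(1) quadratic_entry_x_left[OF x_block(1)] quadratic_entry_xx[OF x_block(1)]
        quadratic_entry_xy[OF x_block(1)]
      unfolding x_block(2) by (cases rule: bordered_index_cases) (auto simp del: sum.lessThan_Suc)
  next
    case (y_block i)
    show ?thesis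
      using q y_block(1) quadratic_entry_y_left[OF y_block(1)] quadratic_entry_yx[OF y_block(1)]
        quadratic_entry_yy[OF y_block(1)]
      unfolding y_block(2) by (cases rule: bordered_index_cases) (auto simp del: sum.lessThan_Suc)
  qed
  then show ?thesis by (simp add: algebra_simps)
qed

lemma bordered_mat_quadratic:
  "bordered_mat m x y \<beta> \<gamma> a1 s d * bordered_mat m x y \<beta> \<gamma> a1 s d + (a1 * a2) \<cdot>\<^sub>m 1\<^sub>m (2*m+1)
    = (a1 + a2) \<cdot>\<^sub>m bordered_mat m x y \<beta> \<gamma> a1 s d"
proof (rule eq_matI)
  fix r q
  assume "r < dim_row ((a1 + a2) \<cdot>\<^sub>m bordered_mat m x y \<beta> \<gamma> a1 s d)"
    and "q < dim_col ((a1 + a2) \<cdot>\<^sub>m bordered_mat m x y \<beta> \<gamma> a1 s d)"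
  then have r: "r < 2*m+1" and q: "q < 2*m+1" by (simp_all add: bordered_mat_def)
  then show "(bordered_mat m x y \<beta> \<gamma> a1 s d * bordered_mat m x y \<beta> \<gamma> a1 s d
      + (a1 * a2) \<cdot>\<^sub>m 1\<^sub>m (2*m+1)) $$ (r, q) = ((a1 + a2) \<cdot>\<^sub>m bordered_mat m x y \<beta> \<gamma> a1 s d) $$ (r, q)"
    using bordered_entry_quadratic[OF r q]
    by (cases "r = q") (simp_all add: bordered_mat_def scalar_prod_def lessThan_atLeast0 del: sum.lessThan_Suc sum.op_ivl_Suc)
qed (simp_all add: bordered_mat_def)

end

section \<open>Identification of \<open>B + C\<close> with the bordered matrix\<close>

lemma prod_reflect:
  fixes f :: "nat \<Rightarrow> 'a::comm_monoid_mult"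
  assumes "a \<le> K" "b \<le> K" "\<forall>e\<in>E. e \<le> K"
  shows "(\<Prod>k\<in>{K-b..K-a} - E. f k) = (\<Prod>l\<in>{a..b} - (\<lambda>k. K - k) ` E. f (K - l))"
proof (rule prod.reindex_bij_witness[of _ "\<lambda>l. K - l" "\<lambda>k. K - k"])
  fix k assume k: "k \<in> {K-b..K-a} - E"
  then show "K - (K - k) = k" "f (K - (K - k)) = f k" using assms by auto
  have "K - k \<noteq> K - e" if "e \<in> E" for e
    using k that assms by (metis Diff_iff diff_diff_cancel le_trans atLeastAtMost_iff diff_le_self)
  then show "K - k \<in> {a..b} - (\<lambda>k. K - k) ` E" using k assms by auto
qed (use assms in \<open>auto simp: image_iff\<close>)

lemma prod_reflect_interval:
  fixes f :: "nat \<Rightarrow> 'a::comm_monoid_mult"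
  assumes "K - b = p" "K - a = q" "a \<le> K" "b \<le> K"
  shows "(\<Prod>k\<in>{p..q}. f k) = (\<Prod>l\<in>{a..b}. f (K - l))"
  using prod_reflect[OF assms(3,4), of "{}" f] assms(1,2) by simp

lemma prod_reflect_interval_minus:
  fixes f :: "nat \<Rightarrow> 'a::comm_monoid_mult"
  assumes "K - b = p" "K - a = q" "a \<le> K" "b \<le> K" "K - e = r" "e \<le> K"
  shows "(\<Prod>k\<in>{p..q} - {r}. f k) = (\<Prod>l\<in>{a..b} - {e}. f (K - l))"
proof -
  have "K - r = e" using assms(5,6) by auto
  then show ?thesis using prod_reflect[OF assms(3,4), of "{r}" f] assms(1,2,5) by auto
qed

definition upper_nodes :: "nat \<Rightarrow> (nat \<Rightarrow> 'a) \<Rightarrow> nat \<Rightarrow> 'a" where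
  "upper_nodes m c l = c (2*m+1-l)"

definition lower_nodes :: "nat \<Rightarrow> (nat \<Rightarrow> 'a) \<Rightarrow> nat \<Rightarrow> 'a" where
  "lower_nodes m c l = c (m+1-l)"

context
  fixes m :: nat and a b c :: "nat \<Rightarrow> complex"
begin

lemmas nodes_defs = upper_nodes_def lower_nodes_def

lemma diffs_below_upper_nodes:
  assumes i: "i \<in> {1..m}"
  shows "(\<Prod>k\<in>{2*m+2-i..2*m}. (c (2*m+1-i) - c k)) = diffs_below (upper_nodes m c) i"
proof -
  have "{1..<i} = {1..i-1}" using i by auto
  then show ?thesis unfolding diffs_below_def
    by (subst prod_reflect_interval[of "2*m+1" "i-1" _ 1]) (use i in \<open>auto simp: nodes_defs intro!: prod.cong\<close>)
qed

lemma diffs_below_lower_nodes: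
  assumes i: "i \<in> {1..m}"
  shows "(\<Prod>k\<in>{m+2-i..m}. (c (m+1-i) - c k)) = diffs_below (lower_nodes m c) i"
proof -
  have "{1..<i} = {1..i-1}" using i by auto
  then show ?thesis unfolding diffs_below_def
    by (subst prod_reflect_interval[of "m+1" "i-1" _ 1]) (use i in \<open>auto simp: nodes_defs intro!: prod.cong\<close>)
qed

lemma diffs_above_upper_nodes:
  assumes j: "j \<in> {1..m}"
  shows "(\<Prod>k\<in>{m+1..2*m-j}. (c k - c (2*m+1-j))) = diffs_above (upper_nodes m c) m j"
  unfolding diffs_above_def greaterThanAtMost_eq_atLeastAtMost_diff
  by (subst prod_reflect_interval[of "2*m+1" m _ "j+1"]) (use j in \<open>auto simp: nodes_defs intro!: prod.cong\<close>)

lemma diffs_above_lower_nodes: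
  assumes j: "j \<in> {1..m}"
  shows "(\<Prod>k\<in>{1..m-j}. (c k - c (m+1-j))) = diffs_above (lower_nodes m c) m j"
  unfolding diffs_above_def greaterThanAtMost_eq_atLeastAtMost_diff
  by (subst prod_reflect_interval[of "m+1" m _ "j+1"]) (use j in \<open>auto simp: nodes_defs intro!: prod.cong\<close>)

lemma Bent_top_x:
  assumes j: "j \<in> {1..m}"
  shows "Bent m a b c 1 (j+1) = top_entry m (upper_nodes m c) (lower_nodes m c) (b 2 - a 1) (b 2 + b 3 - a 1 - a 2) j"
proof -
  have "(\<Prod>k\<in>{j+1..m}. qq a b c k (2*m+1-j)) = (\<Prod>l\<in>{1..m-j}. (c (m+1-l) + c (2*m+1-j) + (b 2 + b 3 - a 1 - a 2)))"
    by (subst prod_reflect_interval[of "m+1" "m-j" _ 1])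
      (use j in \<open>auto simp: qq_def nodes_defs algebra_simps intro!: prod.cong\<close>)
  then show ?thesis
    using j unfolding Bent_def Let_def top_entry_def diffs_above_upper_nodes[OF j, symmetric]
    by (simp add: pp_def nodes_defs)
qed

lemma Bent_top_y:
  assumes j: "j \<in> {1..m}"
  shows "Bent m a b c 1 (m+1+j) = top_entry m (lower_nodes m c) (upper_nodes m c) (b 3 - a 1) (b 2 + b 3 - a 1 - a 2) j"
proof -
  have "(\<Prod>k\<in>{m+1+j..2*m}. qq a b c (m+1-j) k) = (\<Prod>l\<in>{1..m-j}. (c (2*m+1-l) + c (m+1-j) + (b 2 + b 3 - a 1 - a 2)))"
    by (subst prod_reflect_interval[of "2*m+1" "m-j" _ 1])
      (use j in \<open>auto simp: qq_def nodes_defs algebra_simps intro!: prod.cong\<close>)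
  then show ?thesis
    using j unfolding Bent_def Let_def top_entry_def diffs_above_lower_nodes[OF j, symmetric]
    by (simp add: pp_def nodes_defs)
qed

lemma Cent_left_x:
  assumes i: "i \<in> {1..m}"
  shows "Cent m a b c (i+1) 1 = left_entry m (upper_nodes m c) (lower_nodes m c) (b 2 + b 3 - a 1 - a 2) i"
proof -
  have "(\<Prod>k\<in>{1..i}. qq a b c k (2*m+1-i)) = (\<Prod>l\<in>{m+1-i..m}. (c (m+1-l) + c (2*m+1-i) + (b 2 + b 3 - a 1 - a 2)))"
    by (subst prod_reflect_interval[of "m+1" m _ "m+1-i"])
      (use i in \<open>auto simp: qq_def nodes_defs algebra_simps intro!: prod.cong\<close>)
  then show ?thesis
    using i unfolding Cent_def Let_def left_entry_def diffs_below_upper_nodes[OF i, symmetric]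
    by (simp add: nodes_defs)
qed

lemma Cent_left_y:
  assumes i: "i \<in> {1..m}"
  shows "Cent m a b c (m+1+i) 1 = left_entry m (lower_nodes m c) (upper_nodes m c) (b 2 + b 3 - a 1 - a 2) i"
proof -
  have "(\<Prod>k\<in>{m+1..m+i}. qq a b c (m+1-i) k) = (\<Prod>l\<in>{m+1-i..m}. (c (2*m+1-l) + c (m+1-i) + (b 2 + b 3 - a 1 - a 2)))"
    by (subst prod_reflect_interval[of "2*m+1" m _ "m+1-i"])
      (use i in \<open>auto simp: qq_def nodes_defs algebra_simps intro!: prod.cong\<close>)
  then show ?thesis
    using i unfolding Cent_def Let_def left_entry_def diffs_below_lower_nodes[OF i, symmetric]
    by (simp add: nodes_defs)
qed

lemma Bent_cross:
  assumes i: "i \<in> {1..m}" and j: "j \<in> {1..m}"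
  shows "Bent m a b c (i+1) (m+1+j) = cross_entry m (upper_nodes m c) (lower_nodes m c) (b 3 - a 1) (b 2 + b 3 - a 1 - a 2) i j"
proof -
  have "(\<Prod>k\<in>{1..i} - {m+1-j}. qq a b c k (2*m+1-i)) = (\<Prod>l\<in>{m+1-i..m} - {j}. (c (m+1-l) + c (2*m+1-i) + (b 2 + b 3 - a 1 - a 2)))"
    by (subst prod_reflect_interval_minus[of "m+1" m _ "m+1-i" _ j])
      (use i j in \<open>auto simp: qq_def nodes_defs algebra_simps intro!: prod.cong\<close>)
  moreover have "(\<Prod>k\<in>{m+1+j..2*m} - {2*m+1-i}. qq a b c (m+1-j) k) = (\<Prod>l\<in>{1..m-j} - {i}. (c (2*m+1-l) + c (m+1-j) + (b 2 + b 3 - a 1 - a 2)))"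
    by (subst prod_reflect_interval_minus[of "2*m+1" "m-j" _ 1 _ i])
      (use i j in \<open>auto simp: qq_def nodes_defs algebra_simps intro!: prod.cong\<close>)
  ultimately show ?thesis
    using i j unfolding Bent_def Let_def cross_entry_def
      diffs_below_upper_nodes[OF i, symmetric] diffs_above_lower_nodes[OF j, symmetric]
    by (simp add: pp_def nodes_defs)
qed

lemma Cent_cross:
  assumes i: "i \<in> {1..m}" and j: "j \<in> {1..m}"
  shows "Cent m a b c (m+1+i) (j+1) = cross_entry m (lower_nodes m c) (upper_nodes m c) (b 2 - a 1) (b 2 + b 3 - a 1 - a 2) i j"
proof -
  have "(\<Prod>k\<in>{m+1..m+i} - {2*m+1-j}. qq a b c (m+1-i) k) = (\<Prod>l\<in>{m+1-i..m} - {j}. (c (2*m+1-l) + c (m+1-i) + (b 2 + b 3 - a 1 - a 2)))"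
    by (subst prod_reflect_interval_minus[of "2*m+1" m _ "m+1-i" _ j])
      (use i j in \<open>auto simp: qq_def nodes_defs algebra_simps intro!: prod.cong\<close>)
  moreover have "(\<Prod>k\<in>{j+1..m} - {m+1-i}. qq a b c k (2*m+1-j)) = (\<Prod>l\<in>{1..m-j} - {i}. (c (m+1-l) + c (2*m+1-j) + (b 2 + b 3 - a 1 - a 2)))"
    by (subst prod_reflect_interval_minus[of "m+1" "m-j" _ 1 _ i])
      (use i j in \<open>auto simp: qq_def nodes_defs algebra_simps intro!: prod.cong\<close>)
  ultimately show ?thesis
    using i j unfolding Cent_def Let_def cross_entry_def
      diffs_below_lower_nodes[OF i, symmetric] diffs_above_upper_nodes[OF j, symmetric]
    by (simp add: pp_def nodes_defs)
qed

lemma Bent_plus_Cent: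
  assumes r: "r < 2*m+1" and q: "q < 2*m+1"
  shows "Bent m a b c (r+1) (q+1) + Cent m a b c (r+1) (q+1)
    = bordered_entry m (upper_nodes m c) (lower_nodes m c) (b 2 - a 1) (b 3 - a 1) (a 1) (b 2 + b 3 - a 1 - a 2) (b 1 + c (2*m+1)) r q"
  using r
proof (cases rule: bordered_index_cases)
  case corner
  from q show ?thesis
  proof (cases rule: bordered_index_cases)
    case corner
    then show ?thesis using \<open>r = 0\<close> by (simp add: Bent_def Cent_def bordered_entry_simps)
  next
    case (x_block j)
    then show ?thesis using \<open>r = 0\<close> Bent_top_x[OF x_block(1)] by (simp add: Cent_def bordered_entry_simps)
  next
    case (y_block j)
    then show ?thesis using \<open>r = 0\<close> Bent_top_y[OF y_block(1)] by (simp add: Cent_def bordered_entry_simps)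
  qed
next
  case (x_block i)
  note i = x_block(1) and r_eq = x_block(2)
  from q show ?thesis
  proof (cases rule: bordered_index_cases)
    case corner
    then show ?thesis using r_eq i Cent_left_x[OF i] by (simp add: Bent_def bordered_entry_simps)
  next
    case (x_block j)
    then show ?thesis using r_eq i by (auto simp: Bent_def Cent_def bordered_entry_simps nodes_defs)
  next
    case (y_block j)
    then show ?thesis using r_eq i Bent_cross[OF i y_block(1)] by (simp add: Cent_def bordered_entry_simps)
  qed
next
  case (y_block i)
  note i = y_block(1) and r_eq = y_block(2)
  from q show ?thesis
  proof (cases rule: bordered_index_cases)
    case corner
    then show ?thesis using r_eq i Cent_left_y[OF i] by (simp add: Bent_def bordered_entry_simps)
  next
    case (x_block j)
    then show ?thesis using r_eq i Cent_cross[OF i x_block(1)] by (simp add: Bent_def bordered_entry_simps)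
  next
    case (y_block j)
    then show ?thesis using r_eq i by (auto simp: Bent_def Cent_def bordered_entry_simps nodes_defs)
  qed
qed

lemma Bmat_plus_Cmat:
  "Bmat m a b c + Cmat m a b c = bordered_mat m (upper_nodes m c) (lower_nodes m c)
     (b 2 - a 1) (b 3 - a 1) (a 1) (b 2 + b 3 - a 1 - a 2) (b 1 + c (2*m+1))"
proof (rule eq_matI)
  fix r q
  assume "r < dim_row (bordered_mat m (upper_nodes m c) (lower_nodes m c)
      (b 2 - a 1) (b 3 - a 1) (a 1) (b 2 + b 3 - a 1 - a 2) (b 1 + c (2*m+1)))"
    and "q < dim_col (bordered_mat m (upper_nodes m c) (lower_nodes m c)
      (b 2 - a 1) (b 3 - a 1) (a 1) (b 2 + b 3 - a 1 - a 2) (b 1 + c (2*m+1)))"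
  then show "(Bmat m a b c + Cmat m a b c) $$ (r, q) = bordered_mat m (upper_nodes m c) (lower_nodes m c)
      (b 2 - a 1) (b 3 - a 1) (a 1) (b 2 + b 3 - a 1 - a 2) (b 1 + c (2*m+1)) $$ (r, q)"
    using Bent_plus_Cent[of r q] by (simp add: Bmat_def Cmat_def bordered_mat_def)
qed (simp_all add: Bmat_def Cmat_def bordered_mat_def)

end

section \<open>Matrices annihilated by a quadratic with distinct roots\<close>

definition trace_mat :: "'a::comm_ring_1 mat \<Rightarrow> 'a" where
  "trace_mat A = (\<Sum>i<dim_row A. A $$ (i, i))"

lemma trace_mat_mult_comm:
  fixes X Y :: "'a::comm_ring_1 mat"
  assumes X: "X \<in> carrier_mat n k" and Y: "Y \<in> carrier_mat k n"
  shows "trace_mat (X * Y) = trace_mat (Y * X)"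
proof -
  have "trace_mat (X * Y) = (\<Sum>i<n. \<Sum>j<k. X $$ (i, j) * Y $$ (j, i))"
    unfolding trace_mat_def using X Y by (simp add: scalar_prod_def lessThan_atLeast0)
  also have "\<dots> = (\<Sum>j<k. \<Sum>i<n. Y $$ (j, i) * X $$ (i, j))"
    by (subst sum.swap) (simp add: mult.commute)
  also have "\<dots> = trace_mat (Y * X)"
    unfolding trace_mat_def using X Y by (simp add: scalar_prod_def lessThan_atLeast0)
  finally show ?thesis .
qed

lemma trace_mat_similar:
  fixes A B :: "'a::comm_ring_1 mat"
  assumes "similar_mat A B"
  shows "trace_mat A = trace_mat B"
proof -
  obtain n P Q where carr: "{A, B, P, Q} \<subseteq> carrier_mat n n"
    and QP: "Q * P = 1\<^sub>m n" and A: "A = P * B * Q"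
    using similar_matD[OF assms] by blast
  then have "trace_mat A = trace_mat (P * (B * Q))" by (simp add: assoc_mult_mat[of _ n n _ n _ n])
  also have "\<dots> = trace_mat ((B * Q) * P)" using carr by (intro trace_mat_mult_comm) auto
  also have "\<dots> = trace_mat B"
    using carr QP by (simp add: assoc_mult_mat[of _ n n _ n _ n] right_mult_one_mat[of B n n])
  finally show ?thesis .
qed

lemma trace_jordan_matrix:
  "trace_mat (jordan_matrix n_as) = (\<Sum>(n, a)\<leftarrow>n_as. of_nat n * a)"
proof (induction n_as)
  case Nil
  then show ?case by (simp add: trace_mat_def jordan_matrix_def)
next
  case (Cons na n_as)
  obtain n a where na: "na = (n, a)" by force
  let ?J = "jordan_matrix n_as" and ?N = "sum_list (map fst n_as)"
  have split: "(\<Sum>i<n + N. g i) = (\<Sum>i<n. g i) + (\<Sum>i<N. g (n + i))" for g :: "nat \<Rightarrow> 'a" and N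
    by (induction N) (simp_all add: add.assoc)
  have "trace_mat (jordan_matrix (na # n_as))
      = (\<Sum>i<n + ?N. four_block_mat (jordan_block n a) (0\<^sub>m n ?N) (0\<^sub>m ?N n) ?J $$ (i, i))"
    unfolding trace_mat_def na jordan_matrix_Cons by simp
  also have "\<dots> = of_nat n * a + trace_mat ?J"
    unfolding split trace_mat_def by simp
  finally show ?case using Cons na by simp
qed

lemma similar_mat_quadratic:
  fixes A B :: "'a::comm_ring_1 mat"
  assumes sim: "similar_mat A B" and A: "A \<in> carrier_mat n n"
    and quad: "A * A + c \<cdot>\<^sub>m 1\<^sub>m n = b \<cdot>\<^sub>m A"
  shows "B * B + c \<cdot>\<^sub>m 1\<^sub>m n = b \<cdot>\<^sub>m B"
proof -
  obtain k P Q where carr: "{B, A, P, Q} \<subseteq> carrier_mat k k"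
    and PQ: "P * Q = 1\<^sub>m k" and QP: "Q * P = 1\<^sub>m k" and B: "B = P * A * Q"
    using similar_matD[OF similar_mat_sym[OF sim]] by blast
  have k: "k = n" using A carr by auto
  have P: "P \<in> carrier_mat n n" and Q: "Q \<in> carrier_mat n n" using carr k by auto
  have AA: "A * A \<in> carrier_mat n n" and C: "c \<cdot>\<^sub>m 1\<^sub>m n \<in> carrier_mat n n" using A by auto
  have "B * B = P * A * (Q * P) * A * Q"
    unfolding B using A P Q by (simp add: assoc_mult_mat[of _ n n _ n _ n])
  also have "\<dots> = P * (A * A) * Q"
    unfolding QP k using A P Q by (simp add: assoc_mult_mat[of _ n n _ n _ n])
  finally have BB: "B * B = P * (A * A) * Q" .
  have "P * (c \<cdot>\<^sub>m 1\<^sub>m n) * Q = c \<cdot>\<^sub>m (P * Q)"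
    by (simp add: mult_smult_distrib[OF P one_carrier_mat] right_mult_one_mat[OF P]
        mult_smult_assoc_mat[OF P Q])
  then have CC: "P * (c \<cdot>\<^sub>m 1\<^sub>m n) * Q = c \<cdot>\<^sub>m 1\<^sub>m n" unfolding PQ k .
  have "B * B + c \<cdot>\<^sub>m 1\<^sub>m n = P * (A * A) * Q + P * (c \<cdot>\<^sub>m 1\<^sub>m n) * Q"
    unfolding BB CC ..
  also have "\<dots> = P * (A * A + c \<cdot>\<^sub>m 1\<^sub>m n) * Q"
    using P Q AA C by (simp add: mult_add_distrib_mat[OF P AA C] add_mult_distrib_mat[of _ n n _ Q n])
  also have "\<dots> = b \<cdot>\<^sub>m B"
    unfolding quad B using A P Q
    by (simp add: mult_smult_distrib[OF P A] mult_smult_assoc_mat[of "P * A" n n Q n])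
  finally show ?thesis .
qed

text \<open>The entries \<open>(0, 0)\<close> and \<open>(0, 1)\<close> of the square of \<open>jordan_block k a\<close> are \<open>a^2\<close>
  and, for \<open>k \<ge> 2\<close>, \<open>2 a\<close>.\<close>

lemma jordan_matrix_quadratic_blocks:
  fixes n_as :: "(nat \<times> 'a::comm_ring_1) list"
  assumes quad: "jordan_matrix n_as * jordan_matrix n_as + c \<cdot>\<^sub>m 1\<^sub>m (sum_list (map fst n_as))
      = b \<cdot>\<^sub>m jordan_matrix n_as"
    and mem: "(k, a) \<in> set n_as" and k: "k \<ge> 1"
  shows "a * a + c = b * a \<and> (k \<ge> 2 \<longrightarrow> 2 * a = b)"
  using assms
proof (induction n_as)
  case (Cons na n_as)
  obtain n0 a0 where na: "na = (n0, a0)" by force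
  let ?B = "jordan_block n0 a0" and ?J = "jordan_matrix n_as" and ?N = "sum_list (map fst n_as)"
  have J: "jordan_matrix (na # n_as) = four_block_mat ?B (0\<^sub>m n0 ?N) (0\<^sub>m ?N n0) ?J"
    unfolding na by (rule jordan_matrix_Cons)
  have JJ: "jordan_matrix (na # n_as) * jordan_matrix (na # n_as)
      = four_block_mat (?B * ?B) (0\<^sub>m n0 ?N) (0\<^sub>m ?N n0) (?J * ?J)"
    unfolding J by (subst mult_four_block_mat[of _ n0 n0 _ ?N _ ?N _ _ n0 _ ?N]) auto
  have entry: "(?B * ?B) $$ (i, j) + (if i = j then c else 0) = b * ?B $$ (i, j)"
    if "i < n0" "j < n0" for i j
    using arg_cong[OF Cons.prems(1), of "\<lambda>M. M $$ (i, j)"] that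
    unfolding JJ unfolding J by (auto simp: na)
  have rest: "?J * ?J + c \<cdot>\<^sub>m 1\<^sub>m ?N = b \<cdot>\<^sub>m ?J"
  proof (rule eq_matI)
    fix i j assume "i < dim_row (b \<cdot>\<^sub>m ?J)" "j < dim_col (b \<cdot>\<^sub>m ?J)"
    then show "(?J * ?J + c \<cdot>\<^sub>m 1\<^sub>m ?N) $$ (i, j) = (b \<cdot>\<^sub>m ?J) $$ (i, j)"
      using arg_cong[OF Cons.prems(1), of "\<lambda>M. M $$ (n0 + i, n0 + j)"]
      unfolding JJ unfolding J by (simp add: na)
  qed auto
  show ?case
  proof (cases "(k, a) = (n0, a0)")
    case True
    have "?B * ?B = ?B ^\<^sub>m 2" by (simp add: numeral_2_eq_2)
    then have "(?B * ?B) $$ (0, 0) = a * a" "?B $$ (0, 0) = a"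
      and "k \<ge> 2 \<Longrightarrow> (?B * ?B) $$ (0, 1) = 2 * a \<and> ?B $$ (0, 1) = 1"
      using True Cons.prems(3) by (auto simp: jordan_block_pow power2_eq_square)
    then show ?thesis using entry[of 0 0] entry[of 0 1] True Cons.prems(3) by auto
  next
    case False
    then show ?thesis using Cons.IH[OF rest] Cons.prems(2,3) na by auto
  qed
qed simp

lemma diagonal_jordan_matrix:
  assumes "\<forall>p\<in>set n_as. fst p = 1"
  shows "diagonal_mat (jordan_matrix n_as)"
  using assms
proof (induction n_as)
  case Nil
  then show ?case by (simp add: diagonal_mat_def jordan_matrix_def)
next
  case (Cons na n_as)
  obtain a where na: "na = (1, a)" using Cons.prems by (cases na) auto
  have "diagonal_mat (jordan_matrix n_as)" using Cons by simp
  then show ?case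
    unfolding diagonal_mat_def na jordan_matrix_Cons
    by (auto simp: jordan_block_def diagonal_mat_def)
qed

lemma sum_list_blocks_two_values:
  fixes n_as :: "(nat \<times> 'a::comm_ring_1) list"
  assumes "\<forall>p\<in>set n_as. snd p = a1 \<or> snd p = a2" "a1 \<noteq> a2"
  shows "sum_list (map fst n_as)
      = sum_list (map fst (filter (\<lambda>p. snd p = a1) n_as)) + sum_list (map fst (filter (\<lambda>p. snd p = a2) n_as))"
    "(\<Sum>(n, a)\<leftarrow>n_as. of_nat n * a)
      = of_nat (sum_list (map fst (filter (\<lambda>p. snd p = a1) n_as))) * a1
        + of_nat (sum_list (map fst (filter (\<lambda>p. snd p = a2) n_as))) * a2"
  using assms by (induction n_as) (auto simp: algebra_simps)

theorem quadratic_annihilator_diagonalizable: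
  fixes A :: "complex mat"
  assumes A: "A \<in> carrier_mat n n"
    and quad: "A * A + (a1 * a2) \<cdot>\<^sub>m 1\<^sub>m n = (a1 + a2) \<cdot>\<^sub>m A"
    and ne: "a1 \<noteq> a2"
  shows "diagonalizable A"
    and "order a1 (char_poly A) + order a2 (char_poly A) = n"
    and "of_nat (order a1 (char_poly A)) * a1 + of_nat (order a2 (char_poly A)) * a2 = trace_mat A"
proof -
  obtain n_as where jnf: "jordan_nf A n_as"
    using char_poly_factorized[OF A] jordan_nf_exists[OF A] by blast
  let ?J = "jordan_matrix n_as"
  have sim: "similar_mat A ?J" and pos: "0 \<notin> fst ` set n_as" using jnf by (auto simp: jordan_nf_def)
  have dim: "sum_list (map fst n_as) = n"
    using similar_matD[OF sim] A by (metis carrier_matD(1) jordan_matrix_dim(1) insert_subset)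
  have "?J * ?J + (a1 * a2) \<cdot>\<^sub>m 1\<^sub>m (sum_list (map fst n_as)) = (a1 + a2) \<cdot>\<^sub>m ?J"
    unfolding dim by (rule similar_mat_quadratic[OF sim A quad])
  note blocks = jordan_matrix_quadratic_blocks[OF this]
  have block: "fst p = 1 \<and> (snd p = a1 \<or> snd p = a2)" if p: "p \<in> set n_as" for p
  proof -
    obtain k a where pa: "p = (k, a)" by force
    have k: "k \<ge> 1" using pos p pa by (metis fst_conv image_eqI less_one not_less)
    have "(a - a1) * (a - a2) = 0" using blocks[of k a] p pa k by (simp add: algebra_simps)
    then have "a = a1 \<or> a = a2" by simp
    moreover have "k = 1" using blocks[of k a] p pa k ne calculation by (cases "k \<ge> 2") auto
    ultimately show ?thesis using pa by simp
  qed
  show "diagonalizable A"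
    unfolding diagonalizable_def using diagonal_jordan_matrix block sim by blast
  note split = sum_list_blocks_two_values[of n_as a1 a2] block ne
  show "order a1 (char_poly A) + order a2 (char_poly A) = n"
    unfolding jordan_nf_order[OF jnf] using split dim by simp
  show "of_nat (order a1 (char_poly A)) * a1 + of_nat (order a2 (char_poly A)) * a2 = trace_mat A"
    unfolding jordan_nf_order[OF jnf] trace_mat_similar[OF sim] trace_jordan_matrix using split by simp
qed

lemma multiplicities_from_trace:
  fixes a1 a2 :: "'a::field_char_0"
  assumes "k1 + k2 = p + q"
    and "of_nat k1 * a1 + of_nat k2 * a2 = of_nat p * a1 + of_nat q * a2"
    and "a1 \<noteq> a2"
  shows "k1 = p \<and> k2 = q"
proof -
  have "of_nat k2 = (of_nat p + of_nat q - of_nat k1 :: 'a)"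
    using arg_cong[OF assms(1), of "of_nat :: nat \<Rightarrow> 'a"] by (simp add: eq_diff_eq add.commute)
  with assms(2) have "(of_nat k1 - of_nat p) * (a1 - a2) = (0 :: 'a)"
    by (simp add: algebra_simps)
  with assms(3) have "k1 = p" by simp
  with assms(1) show ?thesis by simp
qed

lemma inj_on_upper_nodes:
  assumes "inj_on c {1..2*m+1}"
  shows "inj_on (upper_nodes m c) {1..m}"
proof (rule inj_onI)
  fix i j assume i: "i \<in> {1..m}" and j: "j \<in> {1..m}" and eq: "upper_nodes m c i = upper_nodes m c j"
  have "c (2*m+1-i) = c (2*m+1-j)" using eq unfolding upper_nodes_def .
  then have "2*m+1-i = 2*m+1-j" by (rule inj_onD[OF assms]) (use i j in auto)
  then show "i = j" using i j by auto
qed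

lemma inj_on_lower_nodes:
  assumes "inj_on c {1..2*m+1}"
  shows "inj_on (lower_nodes m c) {1..m}"
proof (rule inj_onI)
  fix i j assume i: "i \<in> {1..m}" and j: "j \<in> {1..m}" and eq: "lower_nodes m c i = lower_nodes m c j"
  have "c (m+1-i) = c (m+1-j)" using eq unfolding lower_nodes_def .
  then have "m+1-i = m+1-j" by (rule inj_onD[OF assms]) (use i j in auto)
  then show "i = j" using i j by auto
qed

lemma sum_upper_lower_nodes:
  fixes c :: "nat \<Rightarrow> 'a::comm_monoid_add"
  shows "(\<Sum>i=1..2*m+1. c i) = c (2*m+1) + (\<Sum>l=1..m. upper_nodes m c l) + (\<Sum>l=1..m. lower_nodes m c l)"
proof -
  have "{1..2*m+1} = insert (2*m+1) ({m+1..2*m} \<union> {1..m})" by auto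
  then have "(\<Sum>i=1..2*m+1. c i) = c (2*m+1) + (\<Sum>i=m+1..2*m. c i) + (\<Sum>i=1..m. c i)"
    by (simp add: sum.union_disjoint add.assoc)
  moreover have "(\<Sum>i=m+1..2*m. c i) = (\<Sum>l=1..m. upper_nodes m c l)"
    unfolding upper_nodes_def
    by (rule sum.reindex_bij_witness[of _ "\<lambda>i. 2*m+1-i" "\<lambda>l. 2*m+1-l"]) auto
  moreover have "(\<Sum>i=1..m. c i) = (\<Sum>l=1..m. lower_nodes m c l)"
    unfolding lower_nodes_def
    by (rule sum.reindex_bij_witness[of _ "\<lambda>i. m+1-i" "\<lambda>l. m+1-l"]) auto
  ultimately show ?thesis by simp
qed

lemma trace_bordered_mat:
  "trace_mat (bordered_mat m x y \<beta> \<gamma> a1 s d)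
    = d + (\<Sum>l=1..m. x l) + (\<Sum>l=1..m. y l) + of_nat m * (\<beta> + \<gamma> + 2 * a1)"
proof -
  let ?G = "bordered_entry m x y \<beta> \<gamma> a1 s d"
  have "trace_mat (bordered_mat m x y \<beta> \<gamma> a1 s d) = (\<Sum>t<2*m+1. ?G t t)"
    by (simp add: trace_mat_def bordered_mat_def del: sum.lessThan_Suc)
  also have "\<dots> = d + (\<Sum>t=1..m. x t + \<beta> + a1) + (\<Sum>t=1..m. y t + \<gamma> + a1)"
    unfolding sum_bordered_index
    by (intro arg_cong2[where f = "(+)"] sum.cong) (auto simp: bordered_entry_simps)
  finally show ?thesis by (simp add: sum.distrib algebra_simps)
qed

lemma trace_Bmat_plus_Cmat:
  "trace_mat (Bmat m a b c + Cmat m a b c)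
    = b 1 + of_nat m * b 2 + of_nat m * b 3 + (\<Sum>i=1..2*m+1. c i)"
  unfolding Bmat_plus_Cmat trace_bordered_mat sum_upper_lower_nodes by (simp add: algebra_simps)

lemma Bmat_plus_Cmat_quadratic:
  assumes "m \<ge> 2" and "inj_on c {1..2*m+1}"
    and "trace_mat (Bmat m a b c + Cmat m a b c) = of_nat (m + 1) * a 1 + of_nat m * a 2"
  shows "(Bmat m a b c + Cmat m a b c) * (Bmat m a b c + Cmat m a b c) + (a 1 * a 2) \<cdot>\<^sub>m 1\<^sub>m (2*m+1)
    = (a 1 + a 2) \<cdot>\<^sub>m (Bmat m a b c + Cmat m a b c)"
  unfolding Bmat_plus_Cmat
proof (rule bordered_quadratic.bordered_mat_quadratic, unfold_locales)
  show "b 1 + c (2*m+1) = a 2 - (b 2 - a 1) - (b 3 - a 1) - (\<Sum>l=1..m. upper_nodes m c l)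
      - (\<Sum>l=1..m. lower_nodes m c l) - (of_nat m - 1) * (b 2 + b 3 - a 1 - a 2)"
    using assms(3) unfolding trace_Bmat_plus_Cmat sum_upper_lower_nodes by (simp add: algebra_simps)
qed (use assms(1,2) inj_on_upper_nodes inj_on_lower_nodes in auto)

theorem theorem2p16:
  fixes m :: nat and a b c :: "nat \<Rightarrow> complex"
  assumes "m \<ge> 2"
    and "a 1 \<noteq> a 2"
    and "b 1 \<noteq> b 2" and "b 1 \<noteq> b 3" and "b 2 \<noteq> b 3"
    and "inj_on c {1..2*m+1}"
    and "of_nat (m + 1) * a 1 + of_nat m * a 2
           = b 1 + of_nat m * b 2 + of_nat m * b 3 + (\<Sum>i = 1..2*m+1. c i)"
  shows "diagonalizable (Bmat m a b c + Cmat m a b c)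
         \<and> order (a 1) (char_poly (Bmat m a b c + Cmat m a b c)) = m + 1
         \<and> order (a 2) (char_poly (Bmat m a b c + Cmat m a b c)) = m"
proof -
  let ?A = "Bmat m a b c + Cmat m a b c"
  have trace: "trace_mat ?A = of_nat (m + 1) * a 1 + of_nat m * a 2"
    using assms(7) by (simp add: trace_Bmat_plus_Cmat)
  have "?A \<in> carrier_mat (2*m+1) (2*m+1)" by (simp add: Bmat_def Cmat_def)
  note diag = quadratic_annihilator_diagonalizable[OF this
      Bmat_plus_Cmat_quadratic[OF assms(1,6) trace] assms(2)]
  have "order (a 1) (char_poly ?A) = m + 1 \<and> order (a 2) (char_poly ?A) = m"
    by (rule multiplicities_from_trace) (use diag(2,3) trace assms(2) in auto)
  with diag(1) show ?thesis by simp
qed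

end
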